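(* Let $d\ge1$, $m\ge1$ be integers, $B>0$, $N\ge1$ an integer and $n=N^d$. Divide $\mathcal X=[0,1]^d$ into $n$ equal axis-aligned cubes $\mathcal X_1,\dots,\mathcal X_n$ of side $1/N$ with centers $x^{(1)},\dots,x^{(n)}$ (boundary points assigned to an arbitrary adjacent cube), and for $f:\mathcal X\to\mathbb R$ let $g_n$ be the function equal to $f(x^{(i)})$ on $\mathcal X_i$. Then \[\sup_{f\in\mathcal F_{d,m,B}}|L_f-L_{g_n}|=\begin{cases}\Theta_{m,d}(Bn^{-1/d}),&\text{if }m=1\text{ or }Bn^{-1/d}>1,\\ \Theta_{m,d}(\max\{B,B^2\}n^{-2/d}),&\text{otherwise},\end{cases}\] and $\sup_{f\in\mathcal F_{d,m,B}}D_{\sup\text{-}\log}(P_f,P_{g_n})=\Theta_{m,d}(Bn^{-1/d})$.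
   Context: For bounded measurable $f:\mathcal X\to\mathbb R$: $Z_f=\int_{\mathcal X}e^f dx$, $L_f=\log Z_f$, $P_f$ the distribution with density $e^f/Z_f$. $\|f\|_{C^m}=\sup_{\alpha\in\mathbb N_0^d,|\alpha|_1\le m}\|\partial^\alpha f\|_\infty$ and $\mathcal F_{d,m,B}=\{f\in C^m(\mathcal X):\|f\|_{C^m}\le B\}$. $D_{\sup\text{-}\log}(P,Q)=\|\log(dP/dQ)\|_\infty$ (essential sup; $\infty$ unless mutually absolutely continuous). $\Theta_{m,d}$: the two sides are bounded by each other up to positive constants depending only on $m,d$, uniformly in $B>0$ and $n$ (within the stated case). *)

theory Defs
  imports "HOL-Analysis.Analysis" "HOL-Probability.Probability"
begin

definition unitcube :: "(real^'d) set" where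
  "unitcube = {x. \<forall>i. 0 \<le> x$i \<and> x$i \<le> 1}"

definition pd :: "'d::finite \<Rightarrow> (real^'d \<Rightarrow> real) \<Rightarrow> real^'d \<Rightarrow> real" where
  "pd i f x = deriv (\<lambda>t. f (x + t *\<^sub>R axis i 1)) 0"

fun pdl :: "'d::finite list \<Rightarrow> (real^'d \<Rightarrow> real) \<Rightarrow> real^'d \<Rightarrow> real" where
  "pdl [] f = f"
| "pdl (i # is) f = pd i (pdl is f)"

fun Ck :: "nat \<Rightarrow> (real^'d::finite \<Rightarrow> real) \<Rightarrow> bool" where
  "Ck 0 f = continuous_on UNIV f"
| "Ck (Suc k) f = (continuous_on UNIV f \<and>
      (\<forall>i x. (\<lambda>t. f (x + t *\<^sub>R axis i 1)) differentiable (at 0)) \<and>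
      (\<forall>i. Ck k (pd i f)))"

definition Fclass :: "nat \<Rightarrow> real \<Rightarrow> (real^'d::finite \<Rightarrow> real) set" where
  "Fclass m B = {f. Ck m f \<and>
      (\<forall>is::'d list. length is \<le> m \<longrightarrow> (\<forall>x\<in>unitcube. \<bar>pdl is f x\<bar> \<le> B))}"

definition muX :: "(real^'d::finite) measure" where
  "muX = restrict_space lebesgue unitcube"

definition Zf :: "(real^'d::finite \<Rightarrow> real) \<Rightarrow> real" where
  "Zf f = (\<integral>x. exp (f x) \<partial>muX)"

definition Lf :: "(real^'d::finite \<Rightarrow> real) \<Rightarrow> real" where
  "Lf f = ln (Zf f)"

definition Pf :: "(real^'d::finite \<Rightarrow> real) \<Rightarrow> (real^'d) measure" where
  "Pf f = density muX (\<lambda>x. ennreal (exp (f x) / Zf f))"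

definition D_suplog :: "'a measure \<Rightarrow> 'a measure \<Rightarrow> ereal" where
  "D_suplog P Q = (if absolutely_continuous P Q \<and> absolutely_continuous Q P
     then esssup Q (\<lambda>x. ereal \<bar>ln (enn2real (RN_deriv Q P x))\<bar>) else \<infinity>)"

definition cell :: "nat \<Rightarrow> ('d::finite \<Rightarrow> nat) \<Rightarrow> (real^'d) set" where
  "cell N k = {x. \<forall>i. real (k i) / real N \<le> x$i \<and> x$i \<le> (real (k i) + 1) / real N}"

definition center :: "nat \<Rightarrow> ('d::finite \<Rightarrow> nat) \<Rightarrow> real^'d" where
  "center N k = (\<chi> i. (real (k i) + 1/2) / real N)"

definition valid_assign :: "nat \<Rightarrow> (real^'d::finite \<Rightarrow> ('d \<Rightarrow> nat)) \<Rightarrow> bool" where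
  "valid_assign N \<sigma> = (\<forall>x\<in>unitcube. (\<forall>i. \<sigma> x i < N) \<and> x \<in> cell N (\<sigma> x))"

definition gn :: "nat \<Rightarrow> (real^'d::finite \<Rightarrow> ('d \<Rightarrow> nat)) \<Rightarrow> (real^'d \<Rightarrow> real) \<Rightarrow> real^'d \<Rightarrow> real" where
  "gn N \<sigma> f x = f (center N (\<sigma> x))"

end

theory Submission
  imports Defs
begin

text \<open>
  On a cell of side \<open>1/N\<close> a function with partial derivatives bounded by \<open>B\<close> stays within
  \<open>dB/(2N)\<close> of its value at the center (integrate along axis-parallel paths). Hence \<open>Z_f/Z_g\<close>
  lies between \<open>e\<^sup>-\<^sup>\<epsilon>\<close> and \<open>e\<^sup>\<epsilon>\<close>, and \<open>log (dP_f/dP_g) = f - g - (L_f - L_g)\<close> is bounded by \<open>2\<epsilon>\<close>.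
  For \<open>m \<ge> 2\<close> and \<open>B \<le> N\<close> one does better: a cell integral does not change when the integrand is
  averaged with its reflection through the center, and after a second-order Taylor expansion
  the linear term only survives inside \<open>cosh\<close>, which is \<open>1 + O(B\<^sup>2/N\<^sup>2)\<close>.

  The lower bounds use functions of one coordinate: the linear function \<open>B x\<^sub>i\<close>, the quadratic
  \<open>B x\<^sub>i\<^sup>2/2\<close> and, when only one derivative is controlled, a cosine of period \<open>1/N\<close> whose minima
  sit at the centers. On the quarter of each cell farthest from the center (in direction \<open>i\<close>)
  the symmetrized integrand exceeds its value at the center by an explicit factor, which
  bounds \<open>L_f - L_g\<close> from below; for \<open>D_sup-log\<close> the linear function alone suffices.
\<close>

section \<open>Smoothness and mean value estimates on the cube\<close>

lemma Ck_SucD: "Ck (Suc k) f \<Longrightarrow> Ck k f"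
proof (induction k arbitrary: f)
  case 0
  then show ?case by simp
next
  case (Suc k)
  then show ?case by (simp only: Ck.simps) blast
qed

lemma Ck_mono: "k \<le> m \<Longrightarrow> Ck m f \<Longrightarrow> Ck k f"
  by (induction m) (metis Ck_SucD le_Suc_eq le_zero_eq)+

lemma Ck_continuous_on: "Ck k f \<Longrightarrow> continuous_on UNIV f"
  by (cases k) auto

lemma has_real_derivative_axis_line:
  assumes "Ck (Suc k) f"
  shows "((\<lambda>t. f (x + t *\<^sub>R axis i 1)) has_real_derivative pd i f (x + t *\<^sub>R axis i 1)) (at t)"
proof -
  define y where "y = x + t *\<^sub>R axis i 1"
  have "(\<lambda>s. f (y + s *\<^sub>R axis i 1)) differentiable (at 0)"
    using assms by simp
  then have "((\<lambda>s. f (y + s *\<^sub>R axis i 1)) has_real_derivative pd i f y) (at (t + - t))"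
    unfolding pd_def by (simp add: DERIV_deriv_iff_real_differentiable)
  then have "((\<lambda>s. f (y + (s + - t) *\<^sub>R axis i 1)) has_real_derivative pd i f y) (at t)"
    by (subst (asm) DERIV_shift)
  moreover have "(\<lambda>s. f (y + (s + - t) *\<^sub>R axis i 1)) = (\<lambda>s. f (x + s *\<^sub>R axis i 1))"
    by (simp add: y_def algebra_simps)
  ultimately show ?thesis
    by (simp add: y_def)
qed

lemma Fclass_D:
  assumes "f \<in> Fclass m B"
  shows "Ck m f" and "length is \<le> m \<Longrightarrow> x \<in> unitcube \<Longrightarrow> \<bar>pdl is f x\<bar> \<le> B"
  using assms by (auto simp: Fclass_def)

lemma Fclass_nonneg: "f \<in> Fclass m B \<Longrightarrow> 0 \<le> B"
  using Fclass_D(2)[of f m B "[]" 0] by (fastforce simp: unitcube_def)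

lemma Fclass_pd_bound:
  "f \<in> Fclass m B \<Longrightarrow> 1 \<le> m \<Longrightarrow> x \<in> unitcube \<Longrightarrow> \<bar>pd i f x\<bar> \<le> B"
  using Fclass_D(2)[of f m B "[i]"] by simp

lemma Fclass_pd2_bound:
  "f \<in> Fclass m B \<Longrightarrow> 2 \<le> m \<Longrightarrow> x \<in> unitcube \<Longrightarrow> \<bar>pd j (pd i f) x\<bar> \<le> B"
  using Fclass_D(2)[of f m B "[j, i]"] by simp

lemma unitcube_eq_cbox: "unitcube = cbox 0 (1::real^'d)"
  by (auto simp: unitcube_def mem_box_cart)

lemma axis_segment_in_unitcube:
  assumes "x \<in> unitcube" "x + s *\<^sub>R axis i 1 \<in> unitcube" "t \<in> closed_segment 0 s"
  shows "x + t *\<^sub>R axis i 1 \<in> unitcube"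
proof -
  obtain u where u: "0 \<le> u" "u \<le> 1" "t = u * s"
    using assms(3) by (auto simp: closed_segment_def)
  have "x + t *\<^sub>R axis i 1 = (1 - u) *\<^sub>R x + u *\<^sub>R (x + s *\<^sub>R axis i 1)"
    by (simp add: u algebra_simps)
  also have "\<dots> \<in> unitcube"
    using convexD[OF _ assms(1,2), of "1 - u" u] u by (simp add: unitcube_eq_cbox convex_box)
  finally show ?thesis .
qed

lemma axis_increment_bound:
  assumes "Ck (Suc k) f" "x \<in> unitcube" "x + s *\<^sub>R axis i 1 \<in> unitcube"
    and M: "\<And>z. z \<in> unitcube \<Longrightarrow> \<bar>pd i f z\<bar> \<le> M"
  shows "\<bar>f (x + s *\<^sub>R axis i 1) - f x\<bar> \<le> M * \<bar>s\<bar>"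
proof -
  have "norm ((\<lambda>t. f (x + t *\<^sub>R axis i 1)) s - (\<lambda>t. f (x + t *\<^sub>R axis i 1)) 0) \<le> M * norm (s - 0)"
  proof (rule field_differentiable_bound[where S = "closed_segment 0 s"])
    fix z assume z: "z \<in> closed_segment 0 s"
    show "((\<lambda>t. f (x + t *\<^sub>R axis i 1)) has_field_derivative pd i f (x + z *\<^sub>R axis i 1))
        (at z within closed_segment 0 s)"
      using has_real_derivative_axis_line[OF assms(1)] by (rule has_field_derivative_at_within)
    show "norm (pd i f (x + z *\<^sub>R axis i 1)) \<le> M"
      using M axis_segment_in_unitcube[OF assms(2,3) z] by simp
  qed auto
  then show ?thesis
    by simp
qed

lemma axis_taylor2_bound:
  assumes "Ck (Suc (Suc k)) f" "x \<in> unitcube" "x + s *\<^sub>R axis i 1 \<in> unitcube"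
    and M: "\<And>z. z \<in> unitcube \<Longrightarrow> \<bar>pd i (pd i f) z\<bar> \<le> M"
  shows "\<bar>f (x + s *\<^sub>R axis i 1) - f x - s * pd i f x\<bar> \<le> M * s\<^sup>2"
proof -
  let ?\<phi> = "\<lambda>t. f (x + t *\<^sub>R axis i 1) - t * pd i f x"
  have "M \<ge> 0"
    using M[OF assms(2)] by simp
  have "norm (?\<phi> s - ?\<phi> 0) \<le> (M * \<bar>s\<bar>) * norm (s - 0)"
  proof (rule field_differentiable_bound[where S = "closed_segment 0 s"])
    fix z assume z: "z \<in> closed_segment 0 s"
    have "(?\<phi> has_real_derivative pd i f (x + z *\<^sub>R axis i 1) - pd i f x) (at z)"
      using has_real_derivative_axis_line[OF assms(1)]
      by (auto intro!: derivative_eq_intros)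
    then show "(?\<phi> has_field_derivative pd i f (x + z *\<^sub>R axis i 1) - pd i f x) (at z within closed_segment 0 s)"
      by (rule has_field_derivative_at_within)
    have "\<bar>pd i f (x + z *\<^sub>R axis i 1) - pd i f x\<bar> \<le> M * \<bar>z\<bar>"
      using assms(1) axis_segment_in_unitcube[OF assms(2,3) z]
      by (intro axis_increment_bound[OF _ assms(2) _ M]) auto
    also have "\<dots> \<le> M * \<bar>s\<bar>"
      using z \<open>M \<ge> 0\<close> by (intro mult_left_mono) (auto simp: closed_segment_eq_real_ivl split: if_splits)
    finally show "norm (pd i f (x + z *\<^sub>R axis i 1) - pd i f x) \<le> M * \<bar>s\<bar>"
      by simp
  qed auto
  then show ?thesis
    by (simp add: power2_eq_square abs_mult)
qed

definition l1_dist :: "real^'n \<Rightarrow> real^'n \<Rightarrow> real" where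
  "l1_dist x y = (\<Sum>i\<in>UNIV. \<bar>x$i - y$i\<bar>)"

text \<open>Growing \<open>S\<close> one coordinate at a time walks from \<open>x\<close> to \<open>y\<close> along axis-parallel segments.\<close>
definition splice :: "real^'n \<Rightarrow> real^'n \<Rightarrow> 'n set \<Rightarrow> real^'n" where
  "splice x y S = (\<chi> j. if j \<in> S then y$j else x$j)"

lemma splice_empty [simp]: "splice x y {} = x"
  and splice_UNIV [simp]: "splice x y UNIV = y"
  by (simp_all add: splice_def vec_eq_iff)

lemma splice_insert:
  "i \<notin> S \<Longrightarrow> splice x y (insert i S) = splice x y S + (y$i - x$i) *\<^sub>R axis i 1"
  by (auto simp: splice_def vec_eq_iff axis_def)

lemma splice_in_unitcube: "x \<in> unitcube \<Longrightarrow> y \<in> unitcube \<Longrightarrow> splice x y S \<in> unitcube"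
  by (auto simp: unitcube_def splice_def)

lemma l1_dist_splice_le: "l1_dist (splice x y S) x \<le> l1_dist y x"
  unfolding l1_dist_def by (rule sum_mono) (simp add: splice_def)

lemma unitcube_lipschitz_l1:
  assumes C: "Ck (Suc k) f" and M: "\<And>i z. z \<in> unitcube \<Longrightarrow> \<bar>pd i f z\<bar> \<le> M"
    and x: "x \<in> unitcube" and y: "y \<in> unitcube"
  shows "\<bar>f y - f x\<bar> \<le> M * l1_dist y x"
proof -
  have "\<bar>f (splice x y S) - f x\<bar> \<le> M * (\<Sum>i\<in>S. \<bar>y$i - x$i\<bar>)" if "finite S" for S
    using that
  proof (induction S rule: finite_induct)
    case (insert i S)
    have "\<bar>f (splice x y S + (y$i - x$i) *\<^sub>R axis i 1) - f (splice x y S)\<bar> \<le> M * \<bar>y$i - x$i\<bar>"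
      using splice_in_unitcube[OF x y, of "insert i S"] splice_in_unitcube[OF x y, of S]
      by (intro axis_increment_bound[OF C _ _ M]) (simp_all add: splice_insert[OF insert(2)])
    then show ?case
      using insert by (simp add: splice_insert distrib_left)
  qed simp
  from this[of UNIV] show ?thesis
    by (simp add: l1_dist_def)
qed

lemma axis_taylor2_bound_off_center:
  assumes C: "Ck (Suc (Suc k)) f"
    and M: "\<And>i j z. z \<in> unitcube \<Longrightarrow> \<bar>pd j (pd i f) z\<bar> \<le> M"
    and z: "z \<in> unitcube" "z + t *\<^sub>R axis i 1 \<in> unitcube" and c: "c \<in> unitcube"
  shows "\<bar>f (z + t *\<^sub>R axis i 1) - f z - t * pd i f c\<bar> \<le> M * t\<^sup>2 + \<bar>t\<bar> * (M * l1_dist z c)"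
proof -
  have "\<bar>f (z + t *\<^sub>R axis i 1) - f z - t * pd i f z\<bar> \<le> M * t\<^sup>2"
    using C z M by (rule axis_taylor2_bound)
  moreover have "\<bar>pd i f z - pd i f c\<bar> \<le> M * l1_dist z c"
    using C M c z by (intro unitcube_lipschitz_l1[where k = k]) auto
  then have "\<bar>t * (pd i f z - pd i f c)\<bar> \<le> \<bar>t\<bar> * (M * l1_dist z c)"
    by (simp add: abs_mult mult_left_mono)
  ultimately show ?thesis
    by (simp add: algebra_simps abs_le_iff)
qed

lemma unitcube_taylor2_l1:
  assumes C: "Ck (Suc (Suc k)) f"
    and M: "\<And>i j z. z \<in> unitcube \<Longrightarrow> \<bar>pd j (pd i f) z\<bar> \<le> M"
    and x: "x \<in> unitcube" and c: "c \<in> unitcube"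
  shows "\<bar>f x - f c - (\<Sum>i\<in>UNIV. (x$i - c$i) * pd i f c)\<bar> \<le> 2 * M * (l1_dist x c)\<^sup>2"
proof -
  define D where "D = l1_dist x c"
  have "M \<ge> 0"
    using M[OF c] by (meson abs_ge_zero order_trans)
  have "\<bar>f (splice c x S) - f c - (\<Sum>i\<in>S. (x$i - c$i) * pd i f c)\<bar> \<le> 2 * M * D * (\<Sum>i\<in>S. \<bar>x$i - c$i\<bar>)"
    if "finite S" for S
    using that
  proof (induction S rule: finite_induct)
    case (insert i S)
    define z where "z = splice c x S"
    define t where "t = x$i - c$i"
    have z: "z \<in> unitcube" "z + t *\<^sub>R axis i 1 \<in> unitcube"
      using splice_in_unitcube[OF c x, of S] splice_in_unitcube[OF c x, of "insert i S"]
      by (simp_all add: z_def t_def splice_insert[OF insert(2)])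
    have "\<bar>t\<bar> \<le> D"
      unfolding D_def l1_dist_def t_def by (rule member_le_sum) auto
    then have "M * t\<^sup>2 \<le> M * D * \<bar>t\<bar>"
      using mult_left_mono[OF mult_right_mono[OF \<open>\<bar>t\<bar> \<le> D\<close> abs_ge_zero[of t]] \<open>M \<ge> 0\<close>]
      by (simp add: power2_eq_square abs_mult_self_eq mult_ac)
    moreover have "\<bar>t\<bar> * (M * l1_dist z c) \<le> M * D * \<bar>t\<bar>"
      using mult_left_mono[OF mult_left_mono[OF l1_dist_splice_le[of c x S] \<open>M \<ge> 0\<close>] abs_ge_zero[of t]]
      by (simp add: z_def D_def mult_ac)
    ultimately have "M * t\<^sup>2 + \<bar>t\<bar> * (M * l1_dist z c) \<le> 2 * M * D * \<bar>t\<bar>"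
      by linarith
    with axis_taylor2_bound_off_center[OF C M z c] insert.IH show ?case
      using insert(1,2) by (simp add: z_def t_def splice_insert algebra_simps abs_le_iff)
  qed simp
  from this[of UNIV] show ?thesis
    by (simp add: D_def l1_dist_def power2_eq_square)
qed

section \<open>The grid of cells\<close>

definition grid :: "nat \<Rightarrow> ('d::finite \<Rightarrow> nat) set" where
  "grid N = {k. \<forall>i. k i < N}"

definition cell_lo :: "nat \<Rightarrow> ('d::finite \<Rightarrow> nat) \<Rightarrow> real^'d" where
  "cell_lo N k = (\<chi> i. real (k i) / real N)"

definition cell_hi :: "nat \<Rightarrow> ('d::finite \<Rightarrow> nat) \<Rightarrow> real^'d" where
  "cell_hi N k = (\<chi> i. (real (k i) + 1) / real N)"

lemma finite_grid: "finite (grid N :: ('d::finite \<Rightarrow> nat) set)"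
proof -
  have "grid N \<subseteq> PiE (UNIV::'d set) (\<lambda>_. {..<N})"
    by (auto simp: grid_def PiE_def Pi_def extensional_def)
  then show ?thesis
    by (rule finite_subset) (simp add: finite_PiE)
qed

lemma zero_in_grid: "1 \<le> N \<Longrightarrow> (\<lambda>_. 0) \<in> grid N"
  by (simp add: grid_def)

lemma cell_eq_cbox: "cell N k = cbox (cell_lo N k) (cell_hi N k)"
  by (auto simp: cell_def mem_box_cart cell_lo_def cell_hi_def)

lemma mem_box_cell_iff:
  "x \<in> box (cell_lo N k) (cell_hi N k) \<longleftrightarrow>
     (\<forall>i. real (k i) / real N < x$i \<and> x$i < (real (k i) + 1) / real N)"
  by (simp add: mem_box_cart cell_lo_def cell_hi_def)

lemma center_in_box_cell: "1 \<le> N \<Longrightarrow> center N k \<in> box (cell_lo N k) (cell_hi N k)"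
  by (simp add: mem_box_cell_iff center_def divide_strict_right_mono)

lemma center_in_cell: "1 \<le> N \<Longrightarrow> center N k \<in> cell N k"
  using center_in_box_cell box_subset_cbox cell_eq_cbox by blast

lemma cell_scaled_bounds:
  assumes "1 \<le> N" "x \<in> cell N k"
  shows "real (k i) \<le> x$i * N" "x$i * N \<le> real (k i) + 1"
  using assms by (auto simp: cell_def field_simps)

lemma cell_center_dist:
  assumes "1 \<le> N" "x \<in> cell N k"
  shows "\<bar>x$i - center N k $ i\<bar> \<le> 1 / (2 * real N)"
proof -
  have "\<bar>x$i - center N k $ i\<bar> = \<bar>x$i * N - (real (k i) + 1/2)\<bar> / N"
    using assms(1) by (simp add: center_def field_simps)
  also have "\<dots> \<le> (1/2) / N"
  proof (rule divide_right_mono)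
    show "\<bar>x$i * N - (real (k i) + 1/2)\<bar> \<le> 1/2"
      using cell_scaled_bounds[OF assms, of i] unfolding abs_le_iff by linarith
  qed simp
  finally show ?thesis
    by simp
qed

lemma l1_dist_center_le:
  fixes k :: "'d::finite \<Rightarrow> nat"
  assumes "1 \<le> N" "x \<in> cell N k"
  shows "l1_dist x (center N k) \<le> real CARD('d) / (2 * real N)"
proof -
  have "l1_dist x (center N k) \<le> of_nat (card (UNIV::'d set)) * (1 / (2 * real N))"
    unfolding l1_dist_def by (rule sum_bounded_above) (rule cell_center_dist[OF assms])
  then show ?thesis
    by simp
qed

lemma reflect_in_cell:
  assumes "1 \<le> N" "x \<in> cell N k"
  shows "2 *\<^sub>R center N k - x \<in> cell N k"
proof -
  have "real (k i) / N \<le> (2 * real (k i) + 1 - x$i * N) / N \<and>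
        (2 * real (k i) + 1 - x$i * N) / N \<le> (real (k i) + 1) / N" for i
    using cell_scaled_bounds[OF assms, of i] by (simp add: divide_right_mono)
  moreover have "(2 *\<^sub>R center N k - x)$i = (2 * real (k i) + 1 - x$i * N) / N" for i
    using assms(1) by (simp add: center_def field_simps)
  ultimately show ?thesis
    by (simp add: cell_def)
qed

lemma cell_subset_unitcube: "k \<in> grid N \<Longrightarrow> cell N k \<subseteq> unitcube"
proof
  fix x assume k: "k \<in> grid N" and x: "x \<in> cell N k"
  have "(real (k i) + 1) / real N \<le> 1" for i
  proof -
    have "k i < N"
      using k by (simp add: grid_def)
    then show ?thesis
      by (simp add: field_simps)
  qed
  moreover have "real (k i) / real N \<le> x$i" "x$i \<le> (real (k i) + 1) / real N" for i
    using x by (auto simp: cell_def)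
  moreover have "0 \<le> real (k i) / real N" for i
    by simp
  ultimately show "x \<in> unitcube"
    unfolding unitcube_def by (smt (verit) mem_Collect_eq)
qed

lemma center_in_unitcube: "1 \<le> N \<Longrightarrow> k \<in> grid N \<Longrightarrow> center N k \<in> unitcube"
  using cell_subset_unitcube center_in_cell by blast

text \<open>Clipping at \<open>N - 1\<close> assigns the face \<open>t = 1\<close> to the last cell.\<close>
lemma floor_index_bounds:
  fixes t :: real
  assumes "1 \<le> N" "0 \<le> t" "t \<le> 1"
  defines "j \<equiv> min (N - 1) (nat \<lfloor>t * N\<rfloor>)"
  shows "j < N" "real j \<le> t * N" "t * N \<le> real j + 1"
proof -
  show "j < N"
    using assms(1) by (simp add: j_def)
  have f0: "0 \<le> \<lfloor>t * N\<rfloor>"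
    using assms by simp
  have "real j \<le> real (nat \<lfloor>t * N\<rfloor>)"
    by (simp add: j_def)
  also have "\<dots> \<le> t * N"
    using f0 by simp
  finally show "real j \<le> t * N" .
  show "t * N \<le> real j + 1"
  proof (cases "nat \<lfloor>t * N\<rfloor> \<le> N - 1")
    case True
    then have "real j = of_int \<lfloor>t * N\<rfloor>"
      using f0 by (simp add: j_def)
    then show ?thesis
      by linarith
  next
    case False
    then have "real j + 1 = N"
      using assms(1) by (simp add: j_def)
    then show ?thesis
      using assms by (simp add: mult_left_le_one_le)
  qed
qed

lemma unitcube_covered_by_cells:
  assumes N: "1 \<le> N" and x: "x \<in> unitcube"
  shows "\<exists>k\<in>grid N. x \<in> cell N k"
proof -
  define k where "k i = min (N - 1) (nat \<lfloor>x$i * N\<rfloor>)" for i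
  have "0 \<le> x$i" "x$i \<le> 1" for i
    using x by (auto simp: unitcube_def)
  note bounds = floor_index_bounds[OF N this, folded k_def]
  have "k \<in> grid N"
    using bounds(1) by (simp add: grid_def)
  moreover have "x \<in> cell N k"
    using bounds(2,3) N by (simp add: cell_def field_simps)
  ultimately show ?thesis
    by blast
qed

lemma box_cell_unique:
  assumes "1 \<le> N" "x \<in> box (cell_lo N k) (cell_hi N k)" "x \<in> cell N k'"
  shows "k' = k"
proof
  fix i
  have "real (k i) < x$i * N" "x$i * N < real (k i) + 1"
    using assms(1,2) by (auto simp: mem_box_cell_iff field_simps)
  moreover have "real (k' i) \<le> x$i * N" "x$i * N \<le> real (k' i) + 1"
    using cell_scaled_bounds[OF assms(1,3)] by auto
  ultimately show "k' i = k i"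
    by linarith
qed

lemma inj_on_cell: "1 \<le> N \<Longrightarrow> inj_on (cell N) (grid N :: ('d::finite \<Rightarrow> nat) set)"
  by (metis box_cell_unique center_in_box_cell center_in_cell inj_onI)

lemma cells_division_of_unitcube:
  assumes N: "1 \<le> N"
  shows "(cell N ` grid N) division_of (unitcube :: (real^'d::finite) set)"
proof (rule division_ofI)
  show "finite (cell N ` grid N)"
    by (simp add: finite_grid)
  show "\<Union> (cell N ` grid N) = unitcube"
    using unitcube_covered_by_cells[OF N] cell_subset_unitcube by blast
  fix C assume "C \<in> cell N ` grid N"
  then show "C \<subseteq> unitcube" "C \<noteq> {}" "\<exists>a b. C = cbox a b"
    using cell_subset_unitcube center_in_cell[OF N] cell_eq_cbox by blast+
next
  fix C1 C2 assume "C1 \<in> cell N ` grid N" "C2 \<in> cell N ` grid N" "C1 \<noteq> C2"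
  then obtain k1 k2 where k: "C1 = cell N k1" "C2 = cell N k2" "k1 \<noteq> k2"
    by blast
  show "interior C1 \<inter> interior C2 = {}"
  proof (rule ccontr)
    assume "interior C1 \<inter> interior C2 \<noteq> {}"
    then obtain x where "x \<in> box (cell_lo N k1) (cell_hi N k1)" "x \<in> box (cell_lo N k2) (cell_hi N k2)"
      using k by (auto simp: cell_eq_cbox)
    then have "k2 = k1"
      using box_cell_unique[OF N, of x k1 k2] box_subset_cbox cell_eq_cbox by blast
    then show False
      using k(3) by simp
  qed
qed

lemma measure_cell:
  assumes "1 \<le> N"
  shows "measure lborel (cell N (k::'d::finite \<Rightarrow> nat)) = 1 / real N ^ CARD('d)"
proof -
  have "measure lborel (cell N k) = (\<Prod>i\<in>UNIV. cell_hi N k $ i - cell_lo N k $ i)"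
    unfolding cell_eq_cbox using center_in_cell[OF assms] cell_eq_cbox
    by (intro content_cbox_cart) blast
  also have "\<dots> = (\<Prod>i\<in>(UNIV::'d set). 1 / real N)"
    by (rule prod.cong) (auto simp: cell_lo_def cell_hi_def add_divide_distrib)
  finally show ?thesis
    by (simp add: power_one_over)
qed

lemma valid_assignD:
  "valid_assign N \<sigma> \<Longrightarrow> x \<in> unitcube \<Longrightarrow> \<sigma> x \<in> grid N \<and> x \<in> cell N (\<sigma> x)"
  by (simp add: valid_assign_def grid_def)

lemma valid_assign_box_cell:
  assumes "1 \<le> N" "valid_assign N \<sigma>" "k \<in> grid N" "x \<in> box (cell_lo N k) (cell_hi N k)"
  shows "\<sigma> x = k"
proof -
  have "x \<in> unitcube"
    using assms(3,4) cell_subset_unitcube box_subset_cbox cell_eq_cbox by blast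
  then show ?thesis
    using box_cell_unique[OF assms(1,4)] valid_assignD[OF assms(2)] by blast
qed

text \<open>The sub-box of cell \<open>k\<close> whose \<open>i\<close>-th side is the fraction \<open>[a, b]\<close> of the cell's.\<close>
definition slab_lo :: "nat \<Rightarrow> ('d::finite \<Rightarrow> nat) \<Rightarrow> 'd \<Rightarrow> real \<Rightarrow> real^'d" where
  "slab_lo N k i a = (\<chi> j. (real (k j) + (if j = i then a else 0)) / real N)"

definition slab_hi :: "nat \<Rightarrow> ('d::finite \<Rightarrow> nat) \<Rightarrow> 'd \<Rightarrow> real \<Rightarrow> real^'d" where
  "slab_hi N k i b = (\<chi> j. (real (k j) + (if j = i then b else 1)) / real N)"

lemma slab_subset_cell:
  assumes "1 \<le> N" "0 \<le> a" "b \<le> 1"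
  shows "cbox (slab_lo N k i a) (slab_hi N k i b) \<subseteq> cell N k"
    and "box (slab_lo N k i a) (slab_hi N k i b) \<subseteq> box (cell_lo N k) (cell_hi N k)"
proof -
  have "cell_lo N k $ j \<le> slab_lo N k i a $ j" "slab_hi N k i b $ j \<le> cell_hi N k $ j" for j
    using assms by (auto simp: slab_lo_def slab_hi_def cell_lo_def cell_hi_def divide_right_mono)
  then show "cbox (slab_lo N k i a) (slab_hi N k i b) \<subseteq> cell N k"
    and "box (slab_lo N k i a) (slab_hi N k i b) \<subseteq> box (cell_lo N k) (cell_hi N k)"
    unfolding cell_eq_cbox subset_iff mem_box_cart by (meson order_trans order_le_less_trans order_less_le_trans)+
qed

lemma box_slab_nonempty:
  assumes "1 \<le> N" "a < b"
  shows "box (slab_lo N k i a) (slab_hi N k i b) \<noteq> {}"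
  using assms by (auto simp: interval_eq_empty_cart slab_lo_def slab_hi_def divide_strict_right_mono not_le)

lemma measure_slab:
  fixes k :: "'d::finite \<Rightarrow> nat"
  assumes "1 \<le> N" "a \<le> b"
  shows "measure lborel (cbox (slab_lo N k i a) (slab_hi N k i b)) = (b - a) / real N ^ CARD('d)"
proof -
  have "measure lborel (cbox (slab_lo N k i a) (slab_hi N k i b))
      = (\<Prod>j\<in>UNIV. slab_hi N k i b $ j - slab_lo N k i a $ j)"
    using assms by (intro content_cbox_cart)
      (auto simp: interval_eq_empty_cart slab_lo_def slab_hi_def divide_right_mono not_less)
  also have "\<dots> = (\<Prod>j\<in>(UNIV::'d set). (if j = i then b - a else 1) * (1 / real N))"
    by (rule prod.cong) (auto simp: slab_lo_def slab_hi_def diff_divide_distrib[symmetric])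
  also have "\<dots> = (\<Prod>j\<in>(UNIV::'d set). if j = i then b - a else 1) * (\<Prod>j\<in>(UNIV::'d set). 1 / real N)"
    by (rule prod.distrib)
  also have "\<dots> = (b - a) / real N ^ CARD('d)"
    by (simp add: prod.delta power_one_over)
  finally show ?thesis .
qed

lemma has_integral_slab_indicator:
  fixes k :: "'d::finite \<Rightarrow> nat"
  assumes "1 \<le> N" "0 \<le> a" "a \<le> b" "b \<le> 1"
  shows "((\<lambda>x. if x \<in> cbox (slab_lo N k i a) (slab_hi N k i b) then c else 0) has_integral
            c * ((b - a) / real N ^ CARD('d))) (cell N k)"
proof -
  have "((\<lambda>x. c) has_integral c * ((b - a) / real N ^ CARD('d))) (cbox (slab_lo N k i a) (slab_hi N k i b))"
    using has_integral_const[of c "slab_lo N k i a" "slab_hi N k i b"] measure_slab[OF assms(1,3), of k i]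
    by (simp add: mult.commute)
  then show ?thesis
    using slab_subset_cell(1)[OF assms(1,2,4)] unfolding cell_eq_cbox
    by (subst has_integral_restrict_closed_subintervals_eq) auto
qed

section \<open>Partition functions as sums over cells\<close>

lemma unitcube_sets_lebesgue: "unitcube \<in> sets lebesgue"
  unfolding unitcube_eq_cbox by simp

lemma exp_integrable_on_unitcube:
  fixes f :: "real^'d::finite \<Rightarrow> real"
  assumes "continuous_on UNIV f"
  shows "(\<lambda>x. exp (f x)) integrable_on unitcube"
  unfolding unitcube_eq_cbox
  using continuous_on_exp[OF continuous_on_subset[OF assms subset_UNIV]] by (rule integrable_continuous)

lemma exp_integrable_on_cell:
  fixes f :: "real^'d::finite \<Rightarrow> real"
  assumes "continuous_on UNIV f"
  shows "(\<lambda>x. exp (f x)) integrable_on cell N k"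
  unfolding cell_eq_cbox
  using continuous_on_exp[OF continuous_on_subset[OF assms subset_UNIV]] by (rule integrable_continuous)

lemma
  assumes "(\<lambda>x. exp (h x)) integrable_on unitcube"
  shows Zf_eq_integral: "Zf h = integral unitcube (\<lambda>x. exp (h x))"
    and integrable_muX_exp: "integrable muX (\<lambda>x. exp (h x))"
proof -
  have "(\<lambda>x. exp (h x)) absolutely_integrable_on unitcube"
    using assms by (rule nonnegative_absolutely_integrable_1) simp
  then have I: "integrable (lebesgue_on unitcube) (\<lambda>x. exp (h x))"
    using unitcube_sets_lebesgue by (rule absolutely_integrable_imp_integrable)
  then show "integrable muX (\<lambda>x. exp (h x))"
    by (simp add: muX_def)
  show "Zf h = integral unitcube (\<lambda>x. exp (h x))"
    using has_integral_integral_lebesgue_on[OF I unitcube_sets_lebesgue]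
    by (simp add: Zf_def muX_def integral_unique)
qed

lemma Zf_pos:
  fixes f :: "real^'d::finite \<Rightarrow> real"
  assumes f: "continuous_on UNIV f"
  shows "0 < Zf f"
proof -
  have "0 \<in> unitcube"
    by (simp add: unitcube_def)
  then have "\<exists>y\<in>unitcube. \<forall>x\<in>unitcube. f y \<le> f x"
    by (intro continuous_attains_inf continuous_on_subset[OF f]) (auto simp: unitcube_eq_cbox)
  then obtain y where y: "\<And>x. x \<in> unitcube \<Longrightarrow> f y \<le> f x"
    by blast
  have "((\<lambda>x::real^'d. exp (f y)) has_integral measure lborel (unitcube :: (real^'d) set) *\<^sub>R exp (f y)) unitcube"
    unfolding unitcube_eq_cbox by (rule has_integral_const)
  moreover have "measure lborel (unitcube :: (real^'d) set) = 1"
    unfolding unitcube_eq_cbox by (subst content_cbox_cart) (auto simp: interval_eq_empty_cart)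
  ultimately have "((\<lambda>x::real^'d. exp (f y)) has_integral exp (f y)) unitcube"
    by simp
  then have "exp (f y) \<le> integral unitcube (\<lambda>x. exp (f x))"
    using y by (intro has_integral_le[OF _ integrable_integral[OF exp_integrable_on_unitcube[OF f]]]) auto
  then show ?thesis
    using Zf_eq_integral[OF exp_integrable_on_unitcube[OF f]] exp_gt_zero[of "f y"] by linarith
qed

lemma has_integral_sum_cells:
  fixes F :: "real^'d::finite \<Rightarrow> real"
  assumes N: "1 \<le> N" and F: "\<And>k. k \<in> grid N \<Longrightarrow> (F has_integral I k) (cell N k)"
  shows "(F has_integral (\<Sum>k\<in>grid N. I k)) unitcube"
proof -
  have "(F has_integral (\<Sum>C\<in>cell N ` grid N. integral C F)) unitcube"
    using F by (intro has_integral_combine_division[OF cells_division_of_unitcube[OF N]])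
      (auto intro: integrable_integral)
  also have "(\<Sum>C\<in>cell N ` grid N. integral C F) = (\<Sum>k\<in>grid N. integral (cell N k) F)"
    using sum.reindex[OF inj_on_cell[OF N]] by (simp add: comp_def)
  also have "\<dots> = (\<Sum>k\<in>grid N. I k)"
    using F by (intro sum.cong) (auto intro: integral_unique)
  finally show ?thesis .
qed

lemma Zf_eq_sum_cells:
  fixes f :: "real^'d::finite \<Rightarrow> real"
  assumes "1 \<le> N" "continuous_on UNIV f"
  shows "Zf f = (\<Sum>k\<in>grid N. integral (cell N k) (\<lambda>x. exp (f x)))"
proof -
  have "((\<lambda>x. exp (f x)) has_integral (\<Sum>k\<in>grid N. integral (cell N k) (\<lambda>x. exp (f x)))) unitcube"
    by (intro has_integral_sum_cells[OF assms(1)] integrable_integral exp_integrable_on_cell assms(2))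
  then show ?thesis
    using Zf_eq_integral[OF exp_integrable_on_unitcube[OF assms(2)]] by (simp add: integral_unique)
qed

lemma has_integral_const_cell:
  fixes k :: "'d::finite \<Rightarrow> nat"
  assumes "1 \<le> N"
  shows "((\<lambda>x. c) has_integral c / real N ^ CARD('d)) (cell N k)"
  using has_integral_const[of c "cell_lo N k" "cell_hi N k"] measure_cell[OF assms, of k]
  by (simp add: cell_eq_cbox)

lemma has_integral_exp_gn_cell:
  fixes k :: "'d::finite \<Rightarrow> nat"
  assumes N: "1 \<le> N" and \<sigma>: "valid_assign N \<sigma>" and k: "k \<in> grid N"
  shows "((\<lambda>x. exp (gn N \<sigma> f x)) has_integral exp (f (center N k)) / real N ^ CARD('d)) (cell N k)"
proof -
  note c = has_integral_const_cell[OF N, of "exp (f (center N k))" k, unfolded cell_eq_cbox]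
  show ?thesis
    unfolding cell_eq_cbox
  proof (rule has_integral_spike[OF negligible_frontier_interval _ c])
    fix x assume "x \<in> cbox (cell_lo N k) (cell_hi N k) - (cbox (cell_lo N k) (cell_hi N k) - box (cell_lo N k) (cell_hi N k))"
    then show "exp (gn N \<sigma> f x) = exp (f (center N k))"
      using valid_assign_box_cell[OF N \<sigma> k] by (simp add: gn_def)
  qed
qed

lemma
  fixes f :: "real^'d::finite \<Rightarrow> real"
  assumes N: "1 \<le> N" and \<sigma>: "valid_assign N \<sigma>"
  shows Zf_gn: "Zf (gn N \<sigma> f) = (\<Sum>k\<in>grid N. exp (f (center N k)) / real N ^ CARD('d))"
    and Zf_gn_pos: "0 < Zf (gn N \<sigma> f)"
    and integrable_muX_exp_gn: "integrable muX (\<lambda>x. exp (gn N \<sigma> f x))"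
proof -
  have I: "((\<lambda>x. exp (gn N \<sigma> f x)) has_integral (\<Sum>k\<in>grid N. exp (f (center N k)) / real N ^ CARD('d))) unitcube"
    using has_integral_exp_gn_cell[OF N \<sigma>] by (rule has_integral_sum_cells[OF N])
  then have "(\<lambda>x. exp (gn N \<sigma> f x)) integrable_on unitcube"
    by blast
  then show Z: "Zf (gn N \<sigma> f) = (\<Sum>k\<in>grid N. exp (f (center N k)) / real N ^ CARD('d))"
    and "integrable muX (\<lambda>x. exp (gn N \<sigma> f x))"
    by (simp_all add: Zf_eq_integral integrable_muX_exp integral_unique[OF I])
  show "0 < Zf (gn N \<sigma> f)"
    unfolding Z using N zero_in_grid[OF N] finite_grid by (intro sum_pos) auto
qed

lemma has_integral_reflect_cell:
  fixes F :: "real^'d::finite \<Rightarrow> real"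
  assumes N: "1 \<le> N" and F: "(F has_integral I) (cell N k)"
  shows "((\<lambda>x. F (2 *\<^sub>R center N k - x)) has_integral I) (cell N k)"
proof -
  have "(\<lambda>x. (1 / (-1::real)) *\<^sub>R x + - ((1 / (-1::real)) *\<^sub>R (2 *\<^sub>R center N k))) ` cell N k
      = (\<lambda>x. 2 *\<^sub>R center N k - x) ` cell N k"
    by (simp add: algebra_simps)
  also have "\<dots> = cell N k"
  proof
    show "(\<lambda>x. 2 *\<^sub>R center N k - x) ` cell N k \<subseteq> cell N k"
      using reflect_in_cell[OF N] by blast
    show "cell N k \<subseteq> (\<lambda>x. 2 *\<^sub>R center N k - x) ` cell N k"
    proof
      fix x assume "x \<in> cell N k"
      then show "x \<in> (\<lambda>x. 2 *\<^sub>R center N k - x) ` cell N k"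
        using reflect_in_cell[OF N] by (intro image_eqI[of _ _ "2 *\<^sub>R center N k - x"]) auto
    qed
  qed
  finally have img: "(\<lambda>x. (1 / (-1::real)) *\<^sub>R x + - ((1 / (-1::real)) *\<^sub>R (2 *\<^sub>R center N k))) ` cell N k = cell N k" .
  have "((\<lambda>x. F ((-1) *\<^sub>R x + 2 *\<^sub>R center N k)) has_integral (1 / (\<bar>-1::real\<bar> ^ DIM(real^'d))) *\<^sub>R I)
     ((\<lambda>x. (1 / (-1::real)) *\<^sub>R x + - ((1 / (-1::real)) *\<^sub>R (2 *\<^sub>R center N k))) ` cbox (cell_lo N k) (cell_hi N k))"
    using F unfolding cell_eq_cbox by (rule has_integral_affinity) simp
  then show ?thesis
    using img by (simp add: cell_eq_cbox algebra_simps)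
qed

text \<open>This is what makes the first-order Taylor term cancel.\<close>
lemma has_integral_symmetrize_cell:
  fixes F :: "real^'d::finite \<Rightarrow> real"
  assumes N: "1 \<le> N" and F: "(F has_integral I) (cell N k)"
  shows "((\<lambda>x. (F x + F (2 *\<^sub>R center N k - x)) / 2) has_integral I) (cell N k)"
  using has_integral_divide[OF has_integral_add[OF F has_integral_reflect_cell[OF N F]], of 2] by simp

lemma integral_cell_exp_ge_symmetric:
  fixes f :: "real^'d::finite \<Rightarrow> real"
  assumes N: "1 \<le> N" and f: "continuous_on UNIV f" and G: "(G has_integral J) (cell N k)"
    and le: "\<And>x. x \<in> cell N k \<Longrightarrow> G x \<le> (exp (f x) + exp (f (2 *\<^sub>R center N k - x))) / 2"
  shows "J \<le> integral (cell N k) (\<lambda>x. exp (f x))"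
  using G has_integral_symmetrize_cell[OF N integrable_integral[OF exp_integrable_on_cell[OF f]]] le
  by (rule has_integral_le)

lemma integral_cell_exp_le_symmetric:
  fixes f :: "real^'d::finite \<Rightarrow> real"
  assumes N: "1 \<le> N" and f: "continuous_on UNIV f" and G: "(G has_integral J) (cell N k)"
    and le: "\<And>x. x \<in> cell N k \<Longrightarrow> (exp (f x) + exp (f (2 *\<^sub>R center N k - x))) / 2 \<le> G x"
  shows "integral (cell N k) (\<lambda>x. exp (f x)) \<le> J"
  using has_integral_symmetrize_cell[OF N integrable_integral[OF exp_integrable_on_cell[OF f]]] G le
  by (rule has_integral_le)

lemma Lf_diff_eq_ln: "0 < Zf f \<Longrightarrow> 0 < Zf g \<Longrightarrow> Lf f - Lf g = ln (Zf f / Zf g)"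
  by (simp add: Lf_def ln_div)

lemma ln_le_Lf_diff_gn:
  fixes f :: "real^'d::finite \<Rightarrow> real"
  assumes N: "1 \<le> N" and \<sigma>: "valid_assign N \<sigma>" and f: "continuous_on UNIV f" and "0 < p"
    and le: "\<And>k. k \<in> grid N \<Longrightarrow>
      p * (exp (f (center N k)) / real N ^ CARD('d)) \<le> integral (cell N k) (\<lambda>x. exp (f x))"
  shows "ln p \<le> Lf f - Lf (gn N \<sigma> f)"
proof -
  have "p * Zf (gn N \<sigma> f) \<le> Zf f"
    unfolding Zf_gn[OF N \<sigma>] Zf_eq_sum_cells[OF N f] sum_distrib_left using le by (rule sum_mono)
  then have "p \<le> Zf f / Zf (gn N \<sigma> f)"
    using Zf_gn_pos[OF N \<sigma>, of f] by (simp add: pos_le_divide_eq)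
  then have "ln p \<le> ln (Zf f / Zf (gn N \<sigma> f))"
    using \<open>0 < p\<close> by simp
  then show ?thesis
    using Lf_diff_eq_ln[OF Zf_pos[OF f] Zf_gn_pos[OF N \<sigma>]] by simp
qed

lemma Lf_diff_gn_le_ln:
  fixes f :: "real^'d::finite \<Rightarrow> real"
  assumes N: "1 \<le> N" and \<sigma>: "valid_assign N \<sigma>" and f: "continuous_on UNIV f"
    and le: "\<And>k. k \<in> grid N \<Longrightarrow>
      integral (cell N k) (\<lambda>x. exp (f x)) \<le> q * (exp (f (center N k)) / real N ^ CARD('d))"
  shows "Lf f - Lf (gn N \<sigma> f) \<le> ln q"
proof -
  have "Zf f \<le> q * Zf (gn N \<sigma> f)"
    unfolding Zf_gn[OF N \<sigma>] Zf_eq_sum_cells[OF N f] sum_distrib_left using le by (rule sum_mono)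
  then have "Zf f / Zf (gn N \<sigma> f) \<le> q"
    using Zf_gn_pos[OF N \<sigma>, of f] by (simp add: pos_divide_le_eq)
  moreover have "0 < Zf f / Zf (gn N \<sigma> f)"
    using Zf_pos[OF f] Zf_gn_pos[OF N \<sigma>, of f] by simp
  ultimately have "ln (Zf f / Zf (gn N \<sigma> f)) \<le> ln q"
    by simp
  then show ?thesis
    using Lf_diff_eq_ln[OF Zf_pos[OF f] Zf_gn_pos[OF N \<sigma>]] by simp
qed

section \<open>The sup-log distance between Gibbs densities\<close>

lemma space_muX: "space muX = unitcube"
  by (simp add: muX_def space_restrict_space)

lemma sets_Pf [simp, measurable_cong]: "sets (Pf h) = sets muX"
  and space_Pf [simp]: "space (Pf h) = space muX"
  by (simp_all add: Pf_def)

lemma borel_measurable_of_integrable_exp: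
  fixes h :: "real^'d::finite \<Rightarrow> real"
  assumes "integrable muX (\<lambda>x. exp (h x))"
  shows "h \<in> borel_measurable muX"
proof -
  have "(\<lambda>x. ln (exp (h x))) \<in> borel_measurable muX"
    using borel_measurable_integrable[OF assms] by measurable
  then show ?thesis
    by simp
qed

lemma
  fixes h :: "real^'d::finite \<Rightarrow> real"
  assumes I: "integrable muX (\<lambda>x. exp (h x))" and Z: "0 < Zf h"
  shows finite_measure_Pf: "finite_measure (Pf h)"
    and null_sets_Pf: "null_sets (Pf h) = null_sets muX"
proof -
  have m: "(\<lambda>x. ennreal (exp (h x) / Zf h)) \<in> borel_measurable muX"
    using borel_measurable_of_integrable_exp[OF I] by measurable
  have "emeasure (Pf h) (space (Pf h)) = (\<integral>\<^sup>+ x. ennreal (exp (h x) / Zf h) * indicator (space muX) x \<partial>muX)"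
    unfolding Pf_def by (simp add: emeasure_density[OF m])
  also have "\<dots> = (\<integral>\<^sup>+ x. ennreal (exp (h x) / Zf h) \<partial>muX)"
    by (rule nn_integral_cong) (simp add: indicator_def)
  also have "\<dots> = ennreal (\<integral> x. exp (h x) / Zf h \<partial>muX)"
    using I Z by (intro nn_integral_eq_integral) auto
  finally show "finite_measure (Pf h)"
    by (intro finite_measureI) simp
  show "null_sets (Pf h) = null_sets muX"
  proof (intro set_eqI iffI)
    fix A :: "(real^'d) set" assume "A \<in> null_sets (Pf h)"
    then have "A \<in> sets muX" "AE x in muX. x \<in> A \<longrightarrow> ennreal (exp (h x) / Zf h) = 0"
      unfolding Pf_def using null_sets_density_iff[OF m] by auto
    then show "A \<in> null_sets muX"
      using Z by (simp add: AE_iff_null_sets)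
  next
    fix A :: "(real^'d) set" assume "A \<in> null_sets muX"
    then have "AE x in muX. x \<notin> A" "A \<in> sets muX"
      using AE_iff_null_sets by blast+
    then show "A \<in> null_sets (Pf h)"
      unfolding Pf_def using null_sets_density_iff[OF m] by (auto elim: AE_mp)
  qed
qed

lemma AE_RN_deriv_Pf:
  fixes h1 h2 :: "real^'d::finite \<Rightarrow> real"
  assumes I1: "integrable muX (\<lambda>x. exp (h1 x))" and Z1: "0 < Zf h1"
    and I2: "integrable muX (\<lambda>x. exp (h2 x))" and Z2: "0 < Zf h2"
  shows "AE x in Pf h2. RN_deriv (Pf h2) (Pf h1) x = ennreal (exp (h1 x - h2 x - (Lf h1 - Lf h2)))"
proof -
  interpret Q: finite_measure "Pf h2"
    using I2 Z2 by (rule finite_measure_Pf)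
  define r where "r x = ennreal (exp (h1 x - h2 x - (Lf h1 - Lf h2)))" for x
  note [measurable] = borel_measurable_of_integrable_exp[OF I1] borel_measurable_of_integrable_exp[OF I2]
  have r: "r \<in> borel_measurable muX" and r': "r \<in> borel_measurable (Pf h2)"
    unfolding r_def by measurable
  have "ennreal (exp (h2 x) / Zf h2) * r x = ennreal (exp (h1 x) / Zf h1)" for x
    using Z1 Z2 by (simp add: r_def Lf_def exp_diff flip: ennreal_mult)
  then have "density (Pf h2) r = Pf h1"
    unfolding Pf_def using r by (subst density_density_eq) auto
  then have "AE x in Pf h2. r x = RN_deriv (Pf h2) (Pf h1) x"
    by (rule Q.RN_deriv_unique[OF r'])
  then show ?thesis
    by (auto simp: r_def elim: AE_mp)
qed

lemma D_suplog_Pf_eq: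
  fixes h1 h2 :: "real^'d::finite \<Rightarrow> real"
  assumes I1: "integrable muX (\<lambda>x. exp (h1 x))" and Z1: "0 < Zf h1"
    and I2: "integrable muX (\<lambda>x. exp (h2 x))" and Z2: "0 < Zf h2"
  shows "D_suplog (Pf h1) (Pf h2) = esssup (Pf h2) (\<lambda>x. ereal \<bar>h1 x - h2 x - (Lf h1 - Lf h2)\<bar>)"
proof -
  note [measurable] = borel_measurable_of_integrable_exp[OF I1] borel_measurable_of_integrable_exp[OF I2]
  have "absolutely_continuous (Pf h1) (Pf h2)" "absolutely_continuous (Pf h2) (Pf h1)"
    unfolding absolutely_continuous_def
    using null_sets_Pf[OF I1 Z1] null_sets_Pf[OF I2 Z2] by simp_all
  then have "D_suplog (Pf h1) (Pf h2) = esssup (Pf h2) (\<lambda>x. ereal \<bar>ln (enn2real (RN_deriv (Pf h2) (Pf h1) x))\<bar>)"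
    by (simp add: D_suplog_def)
  also have "\<dots> = esssup (Pf h2) (\<lambda>x. ereal \<bar>h1 x - h2 x - (Lf h1 - Lf h2)\<bar>)"
    using AE_RN_deriv_Pf[OF I1 Z1 I2 Z2] by (intro esssup_AE_cong) (auto elim!: AE_mp)
  finally show ?thesis .
qed

lemma D_suplog_Pf_le:
  fixes h1 h2 :: "real^'d::finite \<Rightarrow> real"
  assumes I1: "integrable muX (\<lambda>x. exp (h1 x))" and Z1: "0 < Zf h1"
    and I2: "integrable muX (\<lambda>x. exp (h2 x))" and Z2: "0 < Zf h2"
    and le: "\<And>x. x \<in> unitcube \<Longrightarrow> \<bar>h1 x - h2 x - (Lf h1 - Lf h2)\<bar> \<le> e"
  shows "D_suplog (Pf h1) (Pf h2) \<le> ereal e"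
proof -
  note [measurable] = borel_measurable_of_integrable_exp[OF I1] borel_measurable_of_integrable_exp[OF I2]
  show ?thesis
    unfolding D_suplog_Pf_eq[OF I1 Z1 I2 Z2]
    using le by (intro esssup_I) (auto simp: space_muX intro!: AE_I2)
qed

lemma D_suplog_Pf_ge:
  fixes h1 h2 :: "real^'d::finite \<Rightarrow> real"
  assumes I1: "integrable muX (\<lambda>x. exp (h1 x))" and Z1: "0 < Zf h1"
    and I2: "integrable muX (\<lambda>x. exp (h2 x))" and Z2: "0 < Zf h2"
    and S: "open S" "S \<noteq> {}" "S \<subseteq> unitcube"
    and ge: "\<And>x. x \<in> S \<Longrightarrow> a \<le> \<bar>h1 x - h2 x - (Lf h1 - Lf h2)\<bar>"
  shows "ereal a \<le> D_suplog (Pf h1) (Pf h2)"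
proof (rule ccontr)
  define F where "F x = ereal \<bar>h1 x - h2 x - (Lf h1 - Lf h2)\<bar>" for x
  have S_lebesgue: "S \<in> sets lebesgue"
    using S(1) by (simp add: borel_open)
  have S_muX: "S \<in> sets muX"
    unfolding muX_def using S_lebesgue S(3) unitcube_sets_lebesgue
    by (subst sets_restrict_space_iff) auto
  assume "\<not> ereal a \<le> D_suplog (Pf h1) (Pf h2)"
  then have lt: "esssup (Pf h2) F < ereal a"
    unfolding D_suplog_Pf_eq[OF I1 Z1 I2 Z2] F_def by simp
  have "AE x in Pf h2. x \<notin> S"
    using esssup_AE[of F "Pf h2"]
  proof eventually_elim
    case (elim x)
    then have "F x < ereal a"
      using lt by (rule le_less_trans)
    then show ?case
      using ge[of x] by (auto simp: F_def)
  qed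
  then have "AE x in muX. x \<notin> S"
    using AE_iff_null_sets[of S "Pf h2"] AE_iff_null_sets[OF S_muX] S_muX
    by (simp add: null_sets_Pf[OF I2 Z2])
  then have "AE x in lebesgue. x \<in> unitcube \<longrightarrow> x \<notin> S"
    unfolding muX_def by (subst (asm) AE_restrict_space_iff) (use unitcube_sets_lebesgue in auto)
  then have "AE x in lebesgue. x \<notin> S"
    using S(3) by (auto elim: AE_mp)
  then have "negligible S"
    unfolding negligible_iff_null_sets by (rule iffD2[OF AE_iff_null_sets[OF S_lebesgue]])
  then show False
    using open_not_negligible S(1,2) by blast
qed

section \<open>Upper bounds\<close>

lemma Fclass_continuous_on: "f \<in> Fclass m B \<Longrightarrow> continuous_on UNIV f"
  using Fclass_D(1) Ck_continuous_on by blast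

lemma Fclass_normalizable:
  assumes "f \<in> Fclass m B"
  shows "integrable muX (\<lambda>x. exp (f x))" "0 < Zf f"
  using exp_integrable_on_unitcube integrable_muX_exp Zf_pos Fclass_continuous_on[OF assms] by blast+

lemma Fclass_center_dist:
  fixes f :: "real^'d::finite \<Rightarrow> real" and k :: "'d \<Rightarrow> nat"
  assumes f: "f \<in> Fclass m B" "1 \<le> m" and N: "1 \<le> N" and k: "k \<in> grid N" and x: "x \<in> cell N k"
  shows "\<bar>f x - f (center N k)\<bar> \<le> B * real CARD('d) / (2 * real N)"
proof -
  have "Ck (Suc 0) f"
    using Ck_mono[OF f(2) Fclass_D(1)[OF f(1)]] by (simp only: One_nat_def)
  then have "\<bar>f x - f (center N k)\<bar> \<le> B * l1_dist x (center N k)"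
    using cell_subset_unitcube[OF k] x center_in_unitcube[OF N k] Fclass_pd_bound[OF f]
    by (intro unitcube_lipschitz_l1[OF \<open>Ck (Suc 0) f\<close>]) auto
  also have "\<dots> \<le> B * (real CARD('d) / (2 * real N))"
    using l1_dist_center_le[OF N x] Fclass_nonneg[OF f(1)] by (rule mult_left_mono)
  finally show ?thesis
    by simp
qed

lemma Fclass_gn_dist:
  fixes f :: "real^'d::finite \<Rightarrow> real"
  assumes "f \<in> Fclass m B" "1 \<le> m" "1 \<le> N" "valid_assign N \<sigma>" "x \<in> unitcube"
  shows "\<bar>f x - gn N \<sigma> f x\<bar> \<le> B * real CARD('d) / (2 * real N)"
  using Fclass_center_dist[OF assms(1-3)] valid_assignD[OF assms(4,5)] by (simp add: gn_def)

lemma Lf_gn_first_order: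
  fixes f :: "real^'d::finite \<Rightarrow> real"
  assumes f: "f \<in> Fclass m B" "1 \<le> m" and N: "1 \<le> N" and \<sigma>: "valid_assign N \<sigma>"
  shows "\<bar>Lf f - Lf (gn N \<sigma> f)\<bar> \<le> B * real CARD('d) / (2 * real N)"
proof -
  define e where "e = B * real CARD('d) / (2 * real N)"
  note cont = Fclass_continuous_on[OF f(1)]
  have near: "exp (f (center N k)) * exp (- e) \<le> exp (f y)" "exp (f y) \<le> exp (f (center N k)) * exp e"
    if "k \<in> grid N" "y \<in> cell N k" for k y
    using Fclass_center_dist[OF f N that] unfolding e_def[symmetric] abs_le_iff
    by (auto simp flip: exp_add)
  have "ln (exp (- e)) \<le> Lf f - Lf (gn N \<sigma> f)"
  proof (rule ln_le_Lf_diff_gn[OF N \<sigma> cont])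
    fix k :: "'d \<Rightarrow> nat" assume k: "k \<in> grid N"
    have "exp (f (center N k)) * exp (- e) / real N ^ CARD('d) \<le> integral (cell N k) (\<lambda>x. exp (f x))"
    proof (rule integral_cell_exp_ge_symmetric[OF N cont has_integral_const_cell[OF N]])
      fix x assume x: "x \<in> cell N k"
      show "exp (f (center N k)) * exp (- e) \<le> (exp (f x) + exp (f (2 *\<^sub>R center N k - x))) / 2"
        using near[OF k x] near[OF k reflect_in_cell[OF N x]] by simp
    qed
    then show "exp (- e) * (exp (f (center N k)) / real N ^ CARD('d)) \<le> integral (cell N k) (\<lambda>x. exp (f x))"
      by (simp add: mult.commute)
  qed simp
  moreover have "Lf f - Lf (gn N \<sigma> f) \<le> ln (exp e)"
  proof (rule Lf_diff_gn_le_ln[OF N \<sigma> cont])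
    fix k :: "'d \<Rightarrow> nat" assume k: "k \<in> grid N"
    have "integral (cell N k) (\<lambda>x. exp (f x)) \<le> exp (f (center N k)) * exp e / real N ^ CARD('d)"
    proof (rule integral_cell_exp_le_symmetric[OF N cont has_integral_const_cell[OF N]])
      fix x assume x: "x \<in> cell N k"
      show "(exp (f x) + exp (f (2 *\<^sub>R center N k - x))) / 2 \<le> exp (f (center N k)) * exp e"
        using near[OF k x] near[OF k reflect_in_cell[OF N x]] by simp
    qed
    then show "integral (cell N k) (\<lambda>x. exp (f x)) \<le> exp e * (exp (f (center N k)) / real N ^ CARD('d))"
      by (simp add: mult.commute)
  qed
  ultimately show ?thesis
    by (simp add: e_def)
qed

lemma D_suplog_gn_first_order:
  fixes f :: "real^'d::finite \<Rightarrow> real"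
  assumes f: "f \<in> Fclass m B" "1 \<le> m" and N: "1 \<le> N" and \<sigma>: "valid_assign N \<sigma>"
  shows "D_suplog (Pf f) (Pf (gn N \<sigma> f)) \<le> ereal (B * real CARD('d) / real N)"
proof (rule D_suplog_Pf_le[OF Fclass_normalizable[OF f(1)] integrable_muX_exp_gn[OF N \<sigma>] Zf_gn_pos[OF N \<sigma>]])
  fix x :: "real^'d" assume "x \<in> unitcube"
  then show "\<bar>f x - gn N \<sigma> f x - (Lf f - Lf (gn N \<sigma> f))\<bar> \<le> B * real CARD('d) / real N"
    using Fclass_gn_dist[OF f N \<sigma> \<open>x \<in> unitcube\<close>] Lf_gn_first_order[OF f N \<sigma>]
    by (simp add: abs_le_iff field_simps)
qed

lemma abs_exp_diff_le: "\<bar>exp a - exp b\<bar> \<le> exp (max a b) * \<bar>a - b\<bar>" for a b :: real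
proof -
  have "norm (exp a - exp b) \<le> exp (max a b) * norm (a - b)"
  proof (rule field_differentiable_bound[where S = "closed_segment b a" and f = exp and f' = exp])
    fix z assume z: "z \<in> closed_segment b a"
    show "(exp has_field_derivative exp z) (at z within closed_segment b a)"
      by (rule has_field_derivative_at_within[OF DERIV_exp])
    show "norm (exp z) \<le> exp (max a b)"
      using z by (auto simp: closed_segment_eq_real_ivl split: if_splits)
  qed auto
  then show ?thesis
    by simp
qed

lemma cosh_le_one_plus_sq: "cosh t \<le> 1 + t\<^sup>2 * exp \<bar>t\<bar> / 2" for t :: real
proof -
  have "cosh t = 1 + (exp (t/2) - exp (-t/2))\<^sup>2 / 2"
    by (simp add: cosh_def power2_eq_square field_simps flip: exp_add)
  moreover have "\<bar>exp (t/2) - exp (-t/2)\<bar> \<le> exp (\<bar>t\<bar>/2) * \<bar>t\<bar>"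
    using abs_exp_diff_le[of "t/2" "-t/2"] by (simp add: max_def abs_if split: if_splits)
  then have "(exp (t/2) - exp (-t/2))\<^sup>2 \<le> (exp (\<bar>t\<bar>/2) * \<bar>t\<bar>)\<^sup>2"
    by (metis abs_ge_zero power2_abs power_mono)
  moreover have "(exp (\<bar>t\<bar>/2))\<^sup>2 = exp \<bar>t\<bar>"
    by (simp add: power2_eq_square flip: exp_add)
  then have "(exp (\<bar>t\<bar>/2) * \<bar>t\<bar>)\<^sup>2 = t\<^sup>2 * exp \<bar>t\<bar>"
    by (simp add: power_mult_distrib mult.commute)
  ultimately show ?thesis
    by simp
qed

lemma exp_avg_bounds:
  fixes a b c t e :: real
  assumes "\<bar>a - c - t\<bar> \<le> e" "\<bar>b - c + t\<bar> \<le> e"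
  shows "exp c * exp (- e) \<le> (exp a + exp b) / 2"
    and "(exp a + exp b) / 2 \<le> exp c * (exp e * cosh t)"
proof -
  have "exp c * exp (- e) \<le> exp c * exp (- e) * cosh t"
    using cosh_real_ge_1[of t] by simp
  also have "\<dots> = (exp (c - e + t) + exp (c - e - t)) / 2"
    by (simp add: cosh_def exp_add exp_diff exp_minus field_simps)
  also have "\<dots> \<le> (exp a + exp b) / 2"
    using assms by (intro divide_right_mono add_mono) (simp_all add: abs_le_iff)
  finally show "exp c * exp (- e) \<le> (exp a + exp b) / 2" .
  have "(exp a + exp b) / 2 \<le> (exp (c + e + t) + exp (c + e - t)) / 2"
    using assms by (intro divide_right_mono add_mono) (simp_all add: abs_le_iff)
  also have "\<dots> = exp c * (exp e * cosh t)"
    by (simp add: cosh_def exp_add exp_diff exp_minus field_simps)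
  finally show "(exp a + exp b) / 2 \<le> exp c * (exp e * cosh t)" .
qed

lemma Fclass_cell_taylor2:
  fixes f :: "real^'d::finite \<Rightarrow> real" and k :: "'d \<Rightarrow> nat"
  assumes f: "f \<in> Fclass m B" "2 \<le> m" and N: "1 \<le> N" and k: "k \<in> grid N" and x: "x \<in> cell N k"
  defines "t \<equiv> (\<Sum>i\<in>UNIV. (x$i - center N k $ i) * pd i f (center N k))"
  shows "\<bar>f x - f (center N k) - t\<bar> \<le> B * (real CARD('d))\<^sup>2 / (2 * (real N)\<^sup>2)"
    and "\<bar>t\<bar> \<le> B * real CARD('d) / (2 * real N)"
proof -
  have B: "0 \<le> B"
    by (rule Fclass_nonneg[OF f(1)])
  have xc: "x \<in> unitcube" "center N k \<in> unitcube"
    using cell_subset_unitcube[OF k] x center_in_unitcube[OF N k] by auto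
  note l1 = l1_dist_center_le[OF N x]
  have "Ck (Suc (Suc 0)) f"
    using Ck_mono[OF f(2) Fclass_D(1)[OF f(1)]] by (simp only: numeral_2_eq_2)
  then have "\<bar>f x - f (center N k) - t\<bar> \<le> 2 * B * (l1_dist x (center N k))\<^sup>2"
    unfolding t_def using Fclass_pd2_bound[OF f] xc by (intro unitcube_taylor2_l1[OF \<open>Ck (Suc (Suc 0)) f\<close>]) auto
  also have "\<dots> \<le> 2 * B * (real CARD('d) / (2 * real N))\<^sup>2"
    using l1 B by (intro mult_left_mono power_mono) (auto simp: l1_dist_def)
  finally show "\<bar>f x - f (center N k) - t\<bar> \<le> B * (real CARD('d))\<^sup>2 / (2 * (real N)\<^sup>2)"
    by (simp add: power_divide power_mult_distrib)
  have "\<bar>t\<bar> \<le> (\<Sum>i\<in>UNIV. B * \<bar>x$i - center N k $ i\<bar>)"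
    unfolding t_def using Fclass_pd_bound[OF f(1) _ xc(2)] f(2)
    by (intro order_trans[OF sum_abs] sum_mono) (simp add: abs_mult mult.commute mult_right_mono)
  also have "\<dots> \<le> B * (real CARD('d) / (2 * real N))"
    using mult_left_mono[OF l1[unfolded l1_dist_def] B] by (simp add: sum_distrib_left)
  finally show "\<bar>t\<bar> \<le> B * real CARD('d) / (2 * real N)"
    by simp
qed

lemma Fclass_cell_avg_exp_bounds:
  fixes f :: "real^'d::finite \<Rightarrow> real" and k :: "'d \<Rightarrow> nat"
  assumes f: "f \<in> Fclass m B" "2 \<le> m" and N: "1 \<le> N" and k: "k \<in> grid N" and x: "x \<in> cell N k"
  defines "e \<equiv> B * (real CARD('d))\<^sup>2 / (2 * (real N)\<^sup>2)" and "s \<equiv> B * real CARD('d) / (2 * real N)"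
  shows "exp (f (center N k)) * exp (- e) \<le> (exp (f x) + exp (f (2 *\<^sub>R center N k - x))) / 2"
    and "(exp (f x) + exp (f (2 *\<^sub>R center N k - x))) / 2 \<le> exp (f (center N k)) * (exp e * cosh s)"
proof -
  let ?c = "center N k"
  define t where "t = (\<Sum>i\<in>UNIV. (x$i - ?c$i) * pd i f ?c)"
  have "(\<Sum>i\<in>UNIV. ((2 *\<^sub>R ?c - x)$i - ?c$i) * pd i f ?c) = - t"
    by (simp add: t_def sum_negf[symmetric] algebra_simps)
  then have "\<bar>f (2 *\<^sub>R ?c - x) - f ?c + t\<bar> \<le> e"
    using Fclass_cell_taylor2(1)[OF f N k reflect_in_cell[OF N x]] by (simp add: e_def)
  moreover have "\<bar>f x - f ?c - t\<bar> \<le> e" and "\<bar>t\<bar> \<le> s"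
    using Fclass_cell_taylor2[OF f N k x] by (simp_all add: t_def e_def s_def)
  ultimately have "exp (f ?c) * exp (- e) \<le> (exp (f x) + exp (f (2 *\<^sub>R ?c - x))) / 2"
    and hi: "(exp (f x) + exp (f (2 *\<^sub>R ?c - x))) / 2 \<le> exp (f ?c) * (exp e * cosh t)"
    using exp_avg_bounds[of "f x" "f ?c" t e "f (2 *\<^sub>R ?c - x)"] by simp_all
  then show "exp (f ?c) * exp (- e) \<le> (exp (f x) + exp (f (2 *\<^sub>R ?c - x))) / 2"
    by blast
  have "cosh t \<le> cosh s"
    using \<open>\<bar>t\<bar> \<le> s\<close> cosh_real_nonneg_le_iff[of "\<bar>t\<bar>" s] by simp
  with hi show "(exp (f x) + exp (f (2 *\<^sub>R ?c - x))) / 2 \<le> exp (f ?c) * (exp e * cosh s)"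
    by (smt (verit) exp_gt_zero mult_left_mono)
qed

lemma Lf_gn_second_order_bounds:
  fixes f :: "real^'d::finite \<Rightarrow> real"
  assumes f: "f \<in> Fclass m B" "2 \<le> m" and N: "1 \<le> N" and \<sigma>: "valid_assign N \<sigma>"
  defines "e \<equiv> B * (real CARD('d))\<^sup>2 / (2 * (real N)\<^sup>2)" and "s \<equiv> B * real CARD('d) / (2 * real N)"
  shows "- e \<le> Lf f - Lf (gn N \<sigma> f)" and "Lf f - Lf (gn N \<sigma> f) \<le> e + s\<^sup>2 * exp s / 2"
proof -
  note cont = Fclass_continuous_on[OF f(1)]
  note avg = Fclass_cell_avg_exp_bounds[OF f N, folded e_def s_def]
  have "ln (exp (- e)) \<le> Lf f - Lf (gn N \<sigma> f)"
  proof (rule ln_le_Lf_diff_gn[OF N \<sigma> cont])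
    fix k :: "'d \<Rightarrow> nat" assume k: "k \<in> grid N"
    have "exp (f (center N k)) * exp (- e) / real N ^ CARD('d) \<le> integral (cell N k) (\<lambda>x. exp (f x))"
      using avg(1)[OF k] by (rule integral_cell_exp_ge_symmetric[OF N cont has_integral_const_cell[OF N]])
    then show "exp (- e) * (exp (f (center N k)) / real N ^ CARD('d)) \<le> integral (cell N k) (\<lambda>x. exp (f x))"
      by (simp add: mult.commute)
  qed simp
  then show "- e \<le> Lf f - Lf (gn N \<sigma> f)"
    by simp
  have "Lf f - Lf (gn N \<sigma> f) \<le> ln (exp e * cosh s)"
  proof (rule Lf_diff_gn_le_ln[OF N \<sigma> cont])
    fix k :: "'d \<Rightarrow> nat" assume k: "k \<in> grid N"
    have "integral (cell N k) (\<lambda>x. exp (f x)) \<le> exp (f (center N k)) * (exp e * cosh s) / real N ^ CARD('d)"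
      using avg(2)[OF k] by (rule integral_cell_exp_le_symmetric[OF N cont has_integral_const_cell[OF N]])
    then show "integral (cell N k) (\<lambda>x. exp (f x)) \<le> exp e * cosh s * (exp (f (center N k)) / real N ^ CARD('d))"
      by (simp add: mult_ac)
  qed
  also have "\<dots> \<le> e + s\<^sup>2 * exp s / 2"
    using ln_le_minus_one[of "cosh s"] cosh_le_one_plus_sq[of s] Fclass_nonneg[OF f(1)]
    by (simp add: ln_mult s_def)
  finally show "Lf f - Lf (gn N \<sigma> f) \<le> e + s\<^sup>2 * exp s / 2" .
qed

lemma second_order_constant_le:
  fixes B d :: real and N :: nat
  assumes B: "0 \<le> B" "B \<le> real N" and N: "1 \<le> N" and d: "0 \<le> d"
  defines "e \<equiv> B * d\<^sup>2 / (2 * (real N)\<^sup>2)" and "s \<equiv> B * d / (2 * real N)"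
  shows "e + s\<^sup>2 * exp s / 2 \<le> d\<^sup>2 * exp d * max B (B\<^sup>2) / (real N)\<^sup>2"
proof -
  define M where "M = max B (B\<^sup>2)"
  define Q where "Q = d\<^sup>2 * exp d * M / (real N)\<^sup>2"
  have "d\<^sup>2 \<le> d\<^sup>2 * exp d"
    using mult_left_mono[of 1 "exp d" "d\<^sup>2"] d by simp
  then have "B * d\<^sup>2 \<le> M * (d\<^sup>2 * exp d)"
    using B by (intro mult_mono) (auto simp: M_def)
  then have "e \<le> Q / 2"
    by (simp add: Q_def e_def divide_right_mono mult_ac)
  moreover have "s\<^sup>2 * exp s / 2 \<le> Q / 8"
  proof -
    have "s = (B / real N) * (d / 2)"
      by (simp add: s_def)
    also have "\<dots> \<le> 1 * (d / 2)"
      using B N d by (intro mult_right_mono) (auto simp: divide_le_eq)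
    finally have "s \<le> d"
      using d by simp
    then have "B\<^sup>2 * (d\<^sup>2 * exp s) \<le> M * (d\<^sup>2 * exp d)"
      using B by (intro mult_mono) (auto simp: M_def)
    moreover have "s\<^sup>2 * exp s / 2 = B\<^sup>2 * (d\<^sup>2 * exp s) / (real N)\<^sup>2 / 8"
      by (simp add: s_def power2_eq_square field_simps)
    ultimately show ?thesis
      by (simp add: Q_def divide_right_mono mult_ac)
  qed
  moreover have "0 \<le> Q"
    using B by (simp add: Q_def M_def)
  ultimately have "e + s\<^sup>2 * exp s / 2 \<le> Q"
    by linarith
  then show ?thesis
    by (simp add: Q_def M_def)
qed

lemma Lf_gn_second_order:
  fixes f :: "real^'d::finite \<Rightarrow> real"
  assumes f: "f \<in> Fclass m B" "2 \<le> m" and N: "1 \<le> N" and \<sigma>: "valid_assign N \<sigma>"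
    and BN: "B \<le> real N"
  shows "\<bar>Lf f - Lf (gn N \<sigma> f)\<bar> \<le> (real CARD('d))\<^sup>2 * exp (real CARD('d)) * max B (B\<^sup>2) / (real N)\<^sup>2"
proof -
  have "0 \<le> (B * real CARD('d) / (2 * real N))\<^sup>2 * exp (B * real CARD('d) / (2 * real N)) / 2"
    by simp
  then show ?thesis
    using Lf_gn_second_order_bounds[OF f N \<sigma>] second_order_constant_le[OF Fclass_nonneg[OF f(1)] BN N, of "real CARD('d)"]
    unfolding abs_le_iff by linarith
qed

section \<open>Functions of one coordinate\<close>

lemma pd_const: "pd i (\<lambda>x::real^'d::finite. c) = (\<lambda>x. 0)"
  by (rule ext) (simp add: pd_def)

lemma Ck_const: "Ck m (\<lambda>x::real^'d::finite. c)"
  by (induction m arbitrary: c) (simp_all add: pd_const)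

lemma has_real_derivative_axis_coord:
  fixes x :: "real^'d::finite"
  assumes D: "\<And>t. (g has_real_derivative g' t) (at t)"
  shows "((\<lambda>t. g ((x + t *\<^sub>R axis i 1) $ j)) has_real_derivative (if i = j then g' (s + x $ j) else 0)) (at s)"
proof (cases "i = j")
  case True
  have "((\<lambda>t. g (t + x $ j)) has_real_derivative g' (s + x $ j)) (at s)"
    using DERIV_shift[of g "g' (s + x $ j)" s "x $ j"] D by simp
  then show ?thesis
    using True by (simp add: axis_def add.commute)
qed (simp add: axis_def)

lemma pd_coord_fun:
  assumes D: "\<And>t. (g has_real_derivative g' t) (at t)"
  shows "pd i (\<lambda>x::real^'d::finite. g (x $ j)) = (\<lambda>x. if i = j then g' (x $ j) else 0)"
proof
  fix x :: "real^'d"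
  show "pd i (\<lambda>x. g (x $ j)) x = (if i = j then g' (x $ j) else 0)"
    using has_real_derivative_axis_coord[OF D, where x = x and i = i and j = j and s = 0] unfolding pd_def by (simp add: DERIV_imp_deriv)
qed

lemma continuous_on_coord_fun:
  assumes "continuous_on UNIV g"
  shows "continuous_on UNIV (\<lambda>x::real^'d::finite. g (x $ j))"
  using assms by (rule continuous_on_compose2[where f = "\<lambda>x::real^'d. x $ j"]) (auto intro: continuous_intros)

lemma Ck_coord_fun:
  assumes D: "\<And>n t. (\<phi> n has_real_derivative \<phi> (Suc n) t) (at t)"
  shows "Ck m (\<lambda>x::real^'d::finite. \<phi> n (x $ j))"
proof -
  have "continuous_on UNIV (\<phi> n)" for n
    using D by (meson DERIV_isCont continuous_at_imp_continuous_on)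
  then have cont: "continuous_on UNIV (\<lambda>x::real^'d. \<phi> n (x $ j))" for n
    by (rule continuous_on_coord_fun)
  show ?thesis
  proof (induction m arbitrary: n)
    case 0
    show ?case
      using cont by simp
  next
    case (Suc m)
    have "(\<lambda>t. \<phi> n ((x + t *\<^sub>R axis i 1) $ j)) differentiable (at 0)" for i and x :: "real^'d"
      using has_real_derivative_axis_coord[OF D, where x = x and i = i and j = j and s = 0]
      by (auto simp: real_differentiable_def)
    moreover have "Ck m (pd i (\<lambda>x::real^'d. \<phi> n (x $ j)))" for i
      unfolding pd_coord_fun[OF D] using Suc.IH Ck_const by (cases "i = j") simp_all
    ultimately show ?case
      using cont[of n] by (simp only: Ck.simps) blast
  qed
qed

lemma pdl_coord_fun:
  assumes D: "\<And>n t. (\<phi> n has_real_derivative \<phi> (Suc n) t) (at t)"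
  shows "pdl is (\<lambda>x::real^'d::finite. \<phi> 0 (x $ j)) = (\<lambda>x. if set is \<subseteq> {j} then \<phi> (length is) (x $ j) else 0)"
proof (induction "is")
  case (Cons i "is")
  show ?case
  proof (cases "set is \<subseteq> {j}")
    case True
    then have "pdl (i # is) (\<lambda>x::real^'d. \<phi> 0 (x $ j)) = pd i (\<lambda>x. \<phi> (length is) (x $ j))"
      using Cons by simp
    also have "\<dots> = (\<lambda>x. if i = j then \<phi> (Suc (length is)) (x $ j) else 0)"
      by (rule pd_coord_fun[OF D])
    finally show ?thesis
      using True by auto
  next
    case False
    then show ?thesis
      using Cons by (simp add: pd_const)
  qed
qed simp

lemma coord_fun_in_Fclass:
  assumes D: "\<And>n t. (\<phi> n has_real_derivative \<phi> (Suc n) t) (at t)"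
    and B: "0 \<le> B" and bound: "\<And>n t. n \<le> m \<Longrightarrow> 0 \<le> t \<Longrightarrow> t \<le> 1 \<Longrightarrow> \<bar>\<phi> n t\<bar> \<le> B"
  shows "(\<lambda>x::real^'d::finite. \<phi> 0 (x $ j)) \<in> Fclass m B"
  unfolding Fclass_def
proof (intro CollectI conjI allI impI ballI)
  show "Ck m (\<lambda>x::real^'d. \<phi> 0 (x $ j))"
    using D by (rule Ck_coord_fun)
  fix "is" :: "'d list" and x :: "real^'d"
  assume "length is \<le> m" "x \<in> unitcube"
  then show "\<bar>pdl is (\<lambda>x. \<phi> 0 (x $ j)) x\<bar> \<le> B"
    unfolding pdl_coord_fun[where \<phi> = \<phi>, OF D] using bound B by (auto simp: unitcube_def)
qed

definition lin_profile :: "real \<Rightarrow> nat \<Rightarrow> real \<Rightarrow> real" where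
  "lin_profile B n t = (if n = 0 then B * t else if n = 1 then B else 0)"

definition quad_profile :: "real \<Rightarrow> nat \<Rightarrow> real \<Rightarrow> real" where
  "quad_profile B n t = (if n = 0 then B * t\<^sup>2 / 2 else if n = 1 then B * t else if n = 2 then B else 0)"

definition cos_profile :: "real \<Rightarrow> real \<Rightarrow> nat \<Rightarrow> real \<Rightarrow> real" where
  "cos_profile A w n t = (if n = 0 then A else 0) + A * w ^ n * cos (w * t + real n * pi / 2)"

lemma lin_profile_deriv: "(lin_profile B n has_real_derivative lin_profile B (Suc n) t) (at t)"
proof -
  consider "n = 0" | "n \<ge> 1" by linarith
  then show ?thesis
    by cases (auto simp: lin_profile_def[abs_def] intro!: derivative_eq_intros)
qed

lemma quad_profile_deriv: "(quad_profile B n has_real_derivative quad_profile B (Suc n) t) (at t)"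
proof -
  consider "n = 0" | "n = 1" | "n \<ge> 2" by linarith
  then show ?thesis
    by cases (auto simp: quad_profile_def[abs_def] intro!: derivative_eq_intros)
qed

lemma cos_profile_deriv: "(cos_profile A w n has_real_derivative cos_profile A w (Suc n) t) (at t)"
proof -
  have "cos (w * t + real (Suc n) * pi / 2) = - sin (w * t + real n * pi / 2)"
    using cos_add[of "w * t + real n * pi / 2" "pi / 2"] by (simp add: algebra_simps add_divide_distrib)
  then show ?thesis
    unfolding cos_profile_def[abs_def] by (auto intro!: derivative_eq_intros)
qed

lemma lin_coord_in_Fclass:
  assumes "0 \<le> B"
  shows "(\<lambda>x::real^'d::finite. lin_profile B 0 (x $ j)) \<in> Fclass m B"
  using assms by (intro coord_fun_in_Fclass[where \<phi> = "lin_profile B", OF lin_profile_deriv])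
    (auto simp: lin_profile_def abs_mult mult_left_le)

lemma quad_coord_in_Fclass:
  assumes "0 \<le> B"
  shows "(\<lambda>x::real^'d::finite. quad_profile B 0 (x $ j)) \<in> Fclass m B"
proof (intro coord_fun_in_Fclass[where \<phi> = "quad_profile B", OF quad_profile_deriv assms])
  fix n :: nat and t :: real assume "0 \<le> t" "t \<le> 1"
  moreover have "B * t\<^sup>2 \<le> B" if "0 \<le> t" "t \<le> 1"
    using that assms by (simp add: mult_left_le power_le_one)
  ultimately show "\<bar>quad_profile B n t\<bar> \<le> B"
    using assms by (auto simp: quad_profile_def abs_mult mult_left_le)
qed

lemma cos_coord_in_Fclass:
  assumes B: "0 \<le> B" and N: "1 \<le> N"
  shows "(\<lambda>x::real^'d::finite. cos_profile (B / (2 * pi * real N)) (2 * pi * real N) 0 (x $ j)) \<in> Fclass 1 B"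
proof (intro coord_fun_in_Fclass[where \<phi> = "cos_profile (B / (2 * pi * real N)) (2 * pi * real N)", OF cos_profile_deriv B])
  fix n :: nat and t :: real assume n: "n \<le> 1"
  define A where "A = B / (2 * pi * real N)"
  define w where "w = 2 * pi * real N"
  have "1 \<le> pi * real N"
    using N pi_gt3 by (metis less_imp_le mult_mono' mult_1 of_nat_1 of_nat_mono one_le_numeral order.trans zero_le_one)
  then have "B / (pi * real N) \<le> B / 1"
    using B by (intro divide_left_mono) auto
  then have "2 * A \<le> B"
    by (simp add: A_def)
  have "A * w = B" "0 \<le> A"
    using N B by (simp_all add: A_def w_def)
  then have cos_le: "\<bar>A * cos y\<bar> \<le> A" "\<bar>A * w * cos y\<bar> \<le> B" for y
    using B by (simp_all add: abs_mult mult_left_le)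
  consider "n = 0" | "n = 1"
    using n by linarith
  then show "\<bar>cos_profile A w n t\<bar> \<le> B"
  proof cases
    case 1
    have "\<bar>A + A * cos (w * t)\<bar> \<le> A + A"
      using abs_triangle_ineq[of A "A * cos (w * t)"] cos_le(1)[of "w * t"] \<open>0 \<le> A\<close> by simp
    then show ?thesis
      using 1 \<open>2 * A \<le> B\<close> by (simp add: cos_profile_def)
  next
    case 2
    then show ?thesis
      using cos_le(2) by (simp add: cos_profile_def)
  qed
qed

section \<open>Lower bounds\<close>

lemma ln_one_plus_ge_half: "0 \<le> y \<Longrightarrow> y \<le> 1/2 \<Longrightarrow> y / 2 \<le> ln (1 + y)" for y :: real
  using ln_one_plus_pos_lower_bound[of y] mult_left_mono[of y "1/2" y]
  by (simp add: power2_eq_square)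

lemma cosh_ge_one_plus_sq: "1 + t\<^sup>2 / 2 \<le> cosh t" for t :: real
proof -
  define a where "a n = (if even n then t ^ n /\<^sub>R fact n else 0)" for n
  have "a sums cosh t"
    unfolding a_def by (rule cosh_converges)
  then have "sum a {..<3} \<le> cosh t"
    by (metis a_def sums_iff sum_le_suminf finite_lessThan scaleR_nonneg_nonneg zero_le_even_power
        fact_ge_zero order_refl inverse_nonnegative_iff_nonnegative)
  then show ?thesis
    by (simp add: a_def eval_nat_numeral real_scaleR_def)
qed

lemma cosh_gain_lower:
  fixes t :: real
  assumes "0 \<le> t"
  shows "min t (t\<^sup>2) / 16 \<le> ln (1 + (cosh t - 1) / 4)"
proof (cases "t \<le> 2")
  case True
  have "t\<^sup>2 \<le> 2\<^sup>2"
    using power_mono[OF True assms] .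
  then have "t\<^sup>2 / 16 \<le> ln (1 + t\<^sup>2 / 8)"
    using ln_one_plus_ge_half[of "t\<^sup>2 / 8"] by simp
  also have "\<dots> \<le> ln (1 + (cosh t - 1) / 4)"
    using cosh_ge_one_plus_sq[of t] by (intro ln_mono add_pos_nonneg) auto
  finally show ?thesis
    by linarith
next
  case False
  have "2\<^sup>2 \<le> t\<^sup>2"
    using False by (intro power_mono) auto
  have "1/4 \<le> ln (1 + 1/2 :: real)"
    using ln_one_plus_ge_half[of "1/2"] by simp
  also have "\<dots> \<le> ln (1 + (cosh t - 1) / 4)"
    using cosh_ge_one_plus_sq[of t] \<open>2\<^sup>2 \<le> t\<^sup>2\<close> by (intro ln_mono) auto
  finally have ge1: "1/4 \<le> ln (1 + (cosh t - 1) / 4)" .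
  have "exp t / 8 \<le> 1 + (cosh t - 1) / 4"
    using exp_gt_zero[of "-t"] by (simp add: cosh_def field_simps)
  then have "ln (exp t / 8) \<le> ln (1 + (cosh t - 1) / 4)"
    by (intro ln_mono) auto
  moreover have "ln (exp t / 8) = t - 3 * ln 2"
    using ln_realpow[of 2 3] by (simp add: ln_div)
  ultimately have ge2: "t - 3 \<le> ln (1 + (cosh t - 1) / 4)"
    using ln_2_less_1 by linarith
  have "min t (t\<^sup>2) / 16 \<le> t / 16"
    by simp
  then show ?thesis
    using ge1 ge2 by linarith
qed

lemma exp_avg_eq_cosh:
  fixes c p q :: real
  shows "(exp (c + (p + q)) + exp (c + (p - q))) / 2 = exp c * (exp p * cosh q)"
  by (simp add: cosh_def exp_add exp_diff exp_minus field_simps)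

lemma mem_slab_coord:
  fixes k :: "'d::finite \<Rightarrow> nat"
  shows "x \<in> cbox (slab_lo N k i a) (slab_hi N k i b) \<Longrightarrow> (real (k i) + a) / N \<le> x$i \<and> x$i \<le> (real (k i) + b) / N"
    and "x \<in> box (slab_lo N k i a) (slab_hi N k i b) \<Longrightarrow> (real (k i) + a) / N < x$i \<and> x$i < (real (k i) + b) / N"
  by (auto simp: mem_box_cart slab_lo_def slab_hi_def dest: spec[of _ i])

lemma slab_center_offset:
  fixes k :: "'d::finite \<Rightarrow> nat"
  assumes "1 \<le> N" "x \<in> cbox (slab_lo N k i (3/4)) (slab_hi N k i 1)"
  shows "1 / (4 * real N) \<le> x$i - center N k $ i"
proof -
  have "(real (k i) + 3/4) / N - center N k $ i = 1 / (4 * real N)"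
    using assms(1) by (simp add: center_def field_simps)
  then show ?thesis
    using mem_slab_coord(1)[OF assms(2)] by linarith
qed

text \<open>The slab takes up a quarter of the cell, whence the factor \<open>1 + a/4\<close>.\<close>
lemma ln_le_Lf_diff_gn_slab:
  fixes f :: "real^'d::finite \<Rightarrow> real"
  assumes N: "1 \<le> N" and \<sigma>: "valid_assign N \<sigma>" and f: "continuous_on UNIV f" and "0 \<le> a"
    and le: "\<And>k x. k \<in> grid N \<Longrightarrow> x \<in> cell N k \<Longrightarrow>
      exp (f (center N k)) * (1 + (if x \<in> cbox (slab_lo N k i (3/4)) (slab_hi N k i 1) then a else 0))
        \<le> (exp (f x) + exp (f (2 *\<^sub>R center N k - x))) / 2"
  shows "ln (1 + a / 4) \<le> Lf f - Lf (gn N \<sigma> f)"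
proof (rule ln_le_Lf_diff_gn[OF N \<sigma> f])
  fix k :: "'d \<Rightarrow> nat" assume k: "k \<in> grid N"
  define E where "E = exp (f (center N k))"
  have "((\<lambda>x. E + (if x \<in> cbox (slab_lo N k i (3/4)) (slab_hi N k i 1) then E * a else 0)) has_integral
      E / real N ^ CARD('d) + E * a * ((1 - 3/4) / real N ^ CARD('d))) (cell N k)"
    by (intro has_integral_add has_integral_const_cell has_integral_slab_indicator N) auto
  then have "E / real N ^ CARD('d) + E * a * ((1 - 3/4) / real N ^ CARD('d)) \<le> integral (cell N k) (\<lambda>x. exp (f x))"
  proof (rule integral_cell_exp_ge_symmetric[OF N f])
    fix x assume "x \<in> cell N k"
    with le[OF k this] show "E + (if x \<in> cbox (slab_lo N k i (3/4)) (slab_hi N k i 1) then E * a else 0)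
        \<le> (exp (f x) + exp (f (2 *\<^sub>R center N k - x))) / 2"
      by (cases "x \<in> cbox (slab_lo N k i (3/4)) (slab_hi N k i 1)") (simp_all add: E_def distrib_left)
  qed
  then show "(1 + a / 4) * (exp (f (center N k)) / real N ^ CARD('d)) \<le> integral (cell N k) (\<lambda>x. exp (f x))"
    using N by (simp add: E_def field_simps)
qed (use \<open>0 \<le> a\<close> in simp)

lemma Lf_gn_lin_lower:
  fixes j :: "'d::finite"
  assumes N: "1 \<le> N" and \<sigma>: "valid_assign N \<sigma>" and B: "0 \<le> B"
  defines "f \<equiv> \<lambda>x::real^'d. lin_profile B 0 (x $ j)"
  shows "ln (1 + (cosh (B / (4 * real N)) - 1) / 4) \<le> Lf f - Lf (gn N \<sigma> f)"
proof (rule ln_le_Lf_diff_gn_slab[OF N \<sigma>])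
  show "continuous_on UNIV f"
    unfolding f_def using lin_coord_in_Fclass[OF B] by (rule Fclass_continuous_on)
  show "0 \<le> cosh (B / (4 * real N)) - 1"
    using cosh_real_ge_1 by simp
  fix k :: "'d \<Rightarrow> nat" and x assume "k \<in> grid N" "x \<in> cell N k"
  define u where "u = x$j - center N k $ j"
  have "f x = f (center N k) + (0 + B * u)" "f (2 *\<^sub>R center N k - x) = f (center N k) + (0 - B * u)"
    by (simp_all add: f_def lin_profile_def u_def algebra_simps)
  then have "(exp (f x) + exp (f (2 *\<^sub>R center N k - x))) / 2 = exp (f (center N k)) * cosh (B * u)"
    using exp_avg_eq_cosh[of "f (center N k)" 0 "B * u"] by simp
  moreover have "cosh (B / (4 * real N)) \<le> cosh (B * u)"
    if "x \<in> cbox (slab_lo N k j (3/4)) (slab_hi N k j 1)"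
  proof -
    have "B / (4 * real N) \<le> B * u"
      using mult_left_mono[OF slab_center_offset[OF N that] B] by (simp add: u_def)
    moreover have "0 \<le> B / (4 * real N)"
      using B by simp
    ultimately show ?thesis
      using cosh_real_nonneg_le_iff[of "B / (4 * real N)" "B * u"] by simp
  qed
  ultimately show "exp (f (center N k)) * (1 + (if x \<in> cbox (slab_lo N k j (3/4)) (slab_hi N k j 1)
      then cosh (B / (4 * real N)) - 1 else 0)) \<le> (exp (f x) + exp (f (2 *\<^sub>R center N k - x))) / 2"
    using cosh_real_ge_1[of "B * u"] by auto
qed

lemma Lf_gn_quad_lower:
  fixes j :: "'d::finite"
  assumes N: "1 \<le> N" and \<sigma>: "valid_assign N \<sigma>" and B: "0 \<le> B"
  defines "f \<equiv> \<lambda>x::real^'d. quad_profile B 0 (x $ j)"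
  shows "ln (1 + B / (128 * (real N)\<^sup>2)) \<le> Lf f - Lf (gn N \<sigma> f)"
proof -
  have "ln (1 + B / (32 * (real N)\<^sup>2) / 4) \<le> Lf f - Lf (gn N \<sigma> f)"
  proof (rule ln_le_Lf_diff_gn_slab[OF N \<sigma>])
    show "continuous_on UNIV f"
      unfolding f_def using quad_coord_in_Fclass[OF B] by (rule Fclass_continuous_on)
    show "0 \<le> B / (32 * (real N)\<^sup>2)"
      using B by simp
    fix k :: "'d \<Rightarrow> nat" and x assume "k \<in> grid N" "x \<in> cell N k"
    define c where "c = center N k $ j"
    define u where "u = x$j - c"
    have "f x = f (center N k) + (B * u\<^sup>2 / 2 + B * c * u)"
      "f (2 *\<^sub>R center N k - x) = f (center N k) + (B * u\<^sup>2 / 2 - B * c * u)"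
      by (simp_all add: f_def quad_profile_def u_def c_def power2_eq_square field_simps)
    then have "(exp (f x) + exp (f (2 *\<^sub>R center N k - x))) / 2
        = exp (f (center N k)) * (exp (B * u\<^sup>2 / 2) * cosh (B * c * u))"
      by (simp only: exp_avg_eq_cosh)
    moreover have "1 + B * u\<^sup>2 / 2 \<le> exp (B * u\<^sup>2 / 2) * cosh (B * c * u)"
      using exp_ge_add_one_self[of "B * u\<^sup>2 / 2"] cosh_real_ge_1[of "B * c * u"]
      by (smt (verit) exp_gt_zero mult_le_cancel_left1)
    moreover have "B / (32 * (real N)\<^sup>2) \<le> B * u\<^sup>2 / 2"
      if "x \<in> cbox (slab_lo N k j (3/4)) (slab_hi N k j 1)"
    proof -
      have "(1 / (4 * real N))\<^sup>2 \<le> u\<^sup>2"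
        using slab_center_offset[OF N that] by (intro power_mono) (simp_all add: u_def c_def)
      from mult_left_mono[OF this B] show ?thesis
        by (simp add: power_divide)
    qed
    moreover have "0 \<le> B * u\<^sup>2 / 2"
      using B by simp
    ultimately show "exp (f (center N k)) * (1 + (if x \<in> cbox (slab_lo N k j (3/4)) (slab_hi N k j 1)
        then B / (32 * (real N)\<^sup>2) else 0)) \<le> (exp (f x) + exp (f (2 *\<^sub>R center N k - x))) / 2"
      by (auto intro!: mult_left_mono)
  qed
  then show ?thesis
    by simp
qed

lemma cos_at_center: "1 \<le> N \<Longrightarrow> cos (2 * pi * real N * center N k $ j) = -1"
proof -
  assume N: "1 \<le> N"
  have "cos (2 * pi * real N * center N k $ j) = cos (real (2 * k j + 1) * pi)"
    by (rule arg_cong[where f = cos]) (use N in \<open>simp add: center_def field_simps\<close>)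
  also have "\<dots> = -1"
    by (simp only: cos_npi) simp
  finally show ?thesis .
qed

lemma cos_nonneg_on_slab:
  fixes k :: "'d::finite \<Rightarrow> nat"
  assumes N: "1 \<le> N" and x: "x \<in> cbox (slab_lo N k j (3/4)) (slab_hi N k j 1)"
  shows "0 \<le> cos (2 * pi * real N * x $ j)"
proof -
  define \<theta> where "\<theta> = 2 * pi * (real N * x $ j - (real (k j) + 1))"
  have "(real (k j) + 3/4) / N \<le> x$j" "x$j \<le> (real (k j) + 1) / N"
    using mem_slab_coord(1)[OF x] by simp_all
  then have "- 1/4 \<le> real N * x $ j - (real (k j) + 1)" "real N * x $ j - (real (k j) + 1) \<le> 0"
    using N by (simp_all add: field_simps)
  from mult_left_mono[OF this(1), of "2 * pi"] mult_left_mono[OF this(2), of "2 * pi"]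
  have "- (pi / 2) \<le> \<theta> \<and> \<theta> \<le> 0"
    by (simp add: \<theta>_def)
  then have "0 \<le> cos \<theta>"
    by (intro cos_ge_zero) auto
  moreover have "cos (2 * pi * real N * x $ j) = cos (\<theta> + 2 * real (k j + 1) * pi)"
    by (simp add: \<theta>_def algebra_simps)
  moreover have "cos (\<theta> + 2 * real (k j + 1) * pi) = cos \<theta>"
    by (simp only: cos_add cos_2npi sin_2npi mult_1_right mult_zero_right diff_zero)
  ultimately show ?thesis
    by simp
qed

lemma Lf_gn_cos_lower:
  fixes j :: "'d::finite"
  assumes N: "1 \<le> N" and \<sigma>: "valid_assign N \<sigma>" and B: "0 \<le> B"
  defines "A \<equiv> B / (2 * pi * real N)"
  defines "f \<equiv> \<lambda>x::real^'d. cos_profile A (2 * pi * real N) 0 (x $ j)"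
  shows "ln (1 + A / 8) \<le> Lf f - Lf (gn N \<sigma> f)"
proof -
  have A: "0 \<le> A"
    using B by (simp add: A_def)
  have f_eq: "f x = A + A * cos (2 * pi * real N * x $ j)" for x
    by (simp add: f_def cos_profile_def)
  have f_nonneg: "0 \<le> f x" for x
    using A mult_left_mono[of "-1" "cos (2 * pi * real N * x $ j)" A] by (simp add: f_eq)
  have "ln (1 + (A / 2) / 4) \<le> Lf f - Lf (gn N \<sigma> f)"
  proof (rule ln_le_Lf_diff_gn_slab[OF N \<sigma>])
    show "continuous_on UNIV f"
      unfolding f_def A_def using cos_coord_in_Fclass[OF B N] by (rule Fclass_continuous_on)
    show "0 \<le> A / 2"
      using A by simp
    fix k :: "'d \<Rightarrow> nat" and x assume "k \<in> grid N" "x \<in> cell N k"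
    have "A \<le> f x" if "x \<in> cbox (slab_lo N k j (3/4)) (slab_hi N k j 1)"
      using cos_nonneg_on_slab[OF N that] A by (simp add: f_eq)
    moreover have "1 + f x \<le> exp (f x)" "1 \<le> exp (f (2 *\<^sub>R center N k - x))"
      using f_nonneg[of "2 *\<^sub>R center N k - x"] by simp_all
    ultimately have "2 + (if x \<in> cbox (slab_lo N k j (3/4)) (slab_hi N k j 1) then A else 0)
        \<le> exp (f x) + exp (f (2 *\<^sub>R center N k - x))"
      using f_nonneg[of x] by (split if_split) linarith
    then show "exp (f (center N k)) * (1 + (if x \<in> cbox (slab_lo N k j (3/4)) (slab_hi N k j 1)
        then A / 2 else 0)) \<le> (exp (f x) + exp (f (2 *\<^sub>R center N k - x))) / 2"
      using cos_at_center[OF N, of k j] by (simp add: f_eq split: if_splits)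
  qed
  then show ?thesis
    by simp
qed

lemma D_suplog_gn_lin_lower:
  fixes j :: "'d::finite"
  assumes N: "1 \<le> N" and \<sigma>: "valid_assign N \<sigma>" and B: "0 \<le> B"
  defines "f \<equiv> \<lambda>x::real^'d. lin_profile B 0 (x $ j)"
  shows "ereal (B / (4 * real N)) \<le> D_suplog (Pf f) (Pf (gn N \<sigma> f))"
proof -
  define k0 :: "'d \<Rightarrow> nat" where "k0 = (\<lambda>_. 0)"
  define \<delta> where "\<delta> = Lf f - Lf (gn N \<sigma> f)"
  have k0: "k0 \<in> grid N"
    using zero_in_grid[OF N] by (simp add: k0_def)
  have f: "f \<in> Fclass 1 B"
    unfolding f_def by (rule lin_coord_in_Fclass[OF B])
  \<comment> \<open>On the open first cell \<open>gn\<close> is constant, while \<open>f\<close> differs from it by at least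
    \<open>B/(4N)\<close> in either sign on the outer quarters; one of them has the sign opposite to \<open>\<delta>\<close>.\<close>
  define a :: real where "a = (if 0 \<le> \<delta> then 0 else 3/4)"
  define S where "S = box (slab_lo N k0 j a) (slab_hi N k0 j (a + 1/4))"
  have S_cell: "S \<subseteq> box (cell_lo N k0) (cell_hi N k0)"
    unfolding S_def by (intro slab_subset_cell(2)[OF N]) (auto simp: a_def)
  show ?thesis
  proof (rule D_suplog_Pf_ge[OF Fclass_normalizable[OF f] integrable_muX_exp_gn[OF N \<sigma>] Zf_gn_pos[OF N \<sigma>]])
    show "open S" "S \<noteq> {}"
      unfolding S_def by (auto intro!: box_slab_nonempty[OF N])
    show "S \<subseteq> unitcube"
      using S_cell cell_subset_unitcube[OF k0] box_subset_cbox cell_eq_cbox by blast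
    fix x assume x: "x \<in> S"
    then have "gn N \<sigma> f x = B * (1/2) / real N"
      using valid_assign_box_cell[OF N \<sigma> k0] S_cell
      by (auto simp: gn_def f_def lin_profile_def center_def k0_def)
    moreover have "a / N < x$j" "x$j < (a + 1/4) / N"
      using mem_slab_coord(2)[of x N k0 j a "a + 1/4"] x unfolding S_def by (simp_all add: k0_def)
    then have "B * (a / N) \<le> f x" "f x \<le> B * ((a + 1/4) / N)"
      using mult_left_mono[OF less_imp_le[of "a / N" "x$j"] B] mult_left_mono[OF less_imp_le[of "x$j" "(a + 1/4) / N"] B]
      by (simp_all add: f_def lin_profile_def)
    moreover have "B * (a / N) = 4 * a * (B / (4 * N))" "B * ((a + 1/4) / N) = 4 * a * (B / (4 * N)) + B / (4 * N)"
      "B * (1/2) / N = 2 * (B / (4 * N))"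
      using N by (simp_all add: field_simps)
    ultimately show "B / (4 * real N) \<le> \<bar>f x - gn N \<sigma> f x - (Lf f - Lf (gn N \<sigma> f))\<bar>"
      unfolding \<delta>_def[symmetric] by (cases "0 \<le> \<delta>") (simp_all add: a_def abs_if)
  qed
qed

section \<open>The rates\<close>

definition approx_rate :: "nat \<Rightarrow> real \<Rightarrow> nat \<Rightarrow> real" where
  "approx_rate m B N = (if m = 1 \<or> B / real N > 1 then B / real N else max B (B\<^sup>2) / (real N)\<^sup>2)"

lemma Lf_gn_le_approx_rate:
  fixes f :: "real^'d::finite \<Rightarrow> real"
  assumes f: "f \<in> Fclass m B" "1 \<le> m" and N: "1 \<le> N" and \<sigma>: "valid_assign N \<sigma>"
  shows "\<bar>Lf f - Lf (gn N \<sigma> f)\<bar>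
    \<le> ((real CARD('d))\<^sup>2 * exp (real CARD('d)) + real CARD('d)) * approx_rate m B N"
proof (cases "m = 1 \<or> B / real N > 1")
  case True
  have "\<bar>Lf f - Lf (gn N \<sigma> f)\<bar> \<le> (real CARD('d) / 2) * (B / real N)"
    using Lf_gn_first_order[OF f N \<sigma>] by (simp add: mult_ac)
  also have "\<dots> \<le> ((real CARD('d))\<^sup>2 * exp (real CARD('d)) + real CARD('d)) * (B / real N)"
    using Fclass_nonneg[OF f(1)] by (intro mult_right_mono) auto
  finally show ?thesis
    using True by (simp add: approx_rate_def)
next
  case False
  then have "2 \<le> m" "B \<le> real N"
    using f(2) N by (auto simp: not_less divide_le_eq)
  then have "\<bar>Lf f - Lf (gn N \<sigma> f)\<bar>
      \<le> (real CARD('d))\<^sup>2 * exp (real CARD('d)) * (max B (B\<^sup>2) / (real N)\<^sup>2)"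
    using Lf_gn_second_order[OF f(1) _ N \<sigma>] by simp
  also have "\<dots> \<le> ((real CARD('d))\<^sup>2 * exp (real CARD('d)) + real CARD('d)) * (max B (B\<^sup>2) / (real N)\<^sup>2)"
    using Fclass_nonneg[OF f(1)] by (intro mult_right_mono) auto
  finally show ?thesis
    using False by (simp add: approx_rate_def)
qed

lemma D_suplog_gn_le:
  fixes f :: "real^'d::finite \<Rightarrow> real"
  assumes f: "f \<in> Fclass m B" "1 \<le> m" and N: "1 \<le> N" and \<sigma>: "valid_assign N \<sigma>"
  shows "D_suplog (Pf f) (Pf (gn N \<sigma> f))
    \<le> ereal (((real CARD('d))\<^sup>2 * exp (real CARD('d)) + real CARD('d)) * (B / real N))"
proof -
  have "real CARD('d) * (B / real N) \<le> ((real CARD('d))\<^sup>2 * exp (real CARD('d)) + real CARD('d)) * (B / real N)"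
    using Fclass_nonneg[OF f(1)] by (intro mult_right_mono) auto
  moreover have "B * real CARD('d) / real N = real CARD('d) * (B / real N)"
    by simp
  ultimately show ?thesis
    using D_suplog_gn_first_order[OF f N \<sigma>] by (metis ereal_less_eq(3) order_trans)
qed

lemma Lf_gn_lin_rate:
  fixes j :: "'d::finite"
  assumes N: "1 \<le> N" and \<sigma>: "valid_assign N \<sigma>" and B: "0 \<le> B"
  defines "f \<equiv> \<lambda>x::real^'d. lin_profile B 0 (x $ j)" and "t \<equiv> B / (4 * real N)"
  shows "min t (t\<^sup>2) / 16 \<le> \<bar>Lf f - Lf (gn N \<sigma> f)\<bar>"
proof -
  have "0 \<le> t"
    using B by (simp add: t_def)
  then show ?thesis
    using cosh_gain_lower Lf_gn_lin_lower[OF N \<sigma> B, of j] abs_ge_self[of "Lf f - Lf (gn N \<sigma> f)"]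
    unfolding f_def t_def by (meson order_trans)
qed

lemma Lf_gn_cos_rate:
  fixes j :: "'d::finite"
  assumes N: "1 \<le> N" and \<sigma>: "valid_assign N \<sigma>" and B: "0 \<le> B" "B \<le> real N"
  defines "f \<equiv> \<lambda>x::real^'d. cos_profile (B / (2 * pi * real N)) (2 * pi * real N) 0 (x $ j)"
  shows "B / (256 * real N) \<le> \<bar>Lf f - Lf (gn N \<sigma> f)\<bar>"
proof -
  define A where "A = B / (2 * pi * real N)"
  have "A = (B / real N) / (2 * pi)"
    by (simp add: A_def)
  also have "\<dots> \<le> 1 / (2 * pi)"
    using B N by (intro divide_right_mono) (auto simp: divide_le_eq)
  also have "\<dots> \<le> 4"
    using pi_ge_two by (simp add: field_simps)
  finally have "(A / 8) / 2 \<le> ln (1 + A / 8)"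
    using B by (intro ln_one_plus_ge_half) (auto simp: A_def)
  also have "\<dots> \<le> Lf f - Lf (gn N \<sigma> f)"
    unfolding A_def f_def by (rule Lf_gn_cos_lower[OF N \<sigma> B(1)])
  finally have "B / (32 * pi * real N) \<le> \<bar>Lf f - Lf (gn N \<sigma> f)\<bar>"
    by (simp add: A_def)
  moreover have "B / (256 * real N) \<le> B / (32 * pi * real N)"
    using B N pi_less_4 by (intro divide_left_mono) auto
  ultimately show ?thesis
    by linarith
qed

lemma Lf_gn_quad_rate:
  fixes j :: "'d::finite"
  assumes N: "1 \<le> N" and \<sigma>: "valid_assign N \<sigma>" and B: "0 \<le> B" "B \<le> 1"
  defines "f \<equiv> \<lambda>x::real^'d. quad_profile B 0 (x $ j)"
  shows "B / (256 * (real N)\<^sup>2) \<le> \<bar>Lf f - Lf (gn N \<sigma> f)\<bar>"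
proof -
  have "1 \<le> (real N)\<^sup>2"
    using N by simp
  then have "B \<le> 64 * (real N)\<^sup>2"
    using B by linarith
  then have "B / (128 * (real N)\<^sup>2) \<le> 1 / 2"
    using N by (subst pos_divide_le_eq) auto
  then have "B / (128 * (real N)\<^sup>2) / 2 \<le> ln (1 + B / (128 * (real N)\<^sup>2))"
    using B by (intro ln_one_plus_ge_half) auto
  also have "\<dots> \<le> Lf f - Lf (gn N \<sigma> f)"
    unfolding f_def by (rule Lf_gn_quad_lower[OF N \<sigma> B(1)])
  finally show ?thesis
    by simp
qed

lemma approx_rate_le_lin_gain:
  assumes B: "0 \<le> B" and N: "1 \<le> N" and rate: "B / real N > 1 \<or> (m \<noteq> 1 \<and> 1 < B \<and> B / real N \<le> 1)"
  defines "t \<equiv> B / (4 * real N)"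
  shows "approx_rate m B N / 256 \<le> min t (t\<^sup>2) / 16"
proof (cases "B / real N > 1")
  case True
  then have "1/4 < t"
    using N by (simp add: t_def field_simps)
  then have "t / 4 \<le> min t (t\<^sup>2)"
    using mult_left_mono[of "1/4" t t] by (simp add: power2_eq_square)
  moreover have "approx_rate m B N / 256 = t / 64"
    using True by (simp add: approx_rate_def t_def)
  ultimately show ?thesis
    by linarith
next
  case False
  then have "t \<le> 1" "0 \<le> t"
    using N B by (simp_all add: t_def field_simps)
  then have "min t (t\<^sup>2) = t\<^sup>2"
    by (simp add: power2_eq_square mult_left_le)
  moreover have "max B (B\<^sup>2) = B\<^sup>2"
    using rate False by (simp add: power2_eq_square)
  ultimately show ?thesis
    using rate False by (simp add: approx_rate_def t_def power_divide)
qed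

lemma exists_Fclass_Lf_gn_ge:
  fixes \<sigma> :: "real^'d::finite \<Rightarrow> ('d \<Rightarrow> nat)"
  assumes m: "1 \<le> m" and B: "0 \<le> B" and N: "1 \<le> N" and \<sigma>: "valid_assign N \<sigma>"
  shows "\<exists>f\<in>Fclass m B. approx_rate m B N / 256 \<le> \<bar>Lf f - Lf (gn N \<sigma> f)\<bar>"
proof -
  consider (lin) "B / real N > 1 \<or> (m \<noteq> 1 \<and> 1 < B \<and> B / real N \<le> 1)"
    | (cos) "B / real N \<le> 1" "m = 1" | (quad) "B / real N \<le> 1" "m \<noteq> 1" "B \<le> 1"
    by linarith
  then show ?thesis
  proof cases
    case lin
    let ?lin = "\<lambda>x::real^'d. lin_profile B 0 (x $ undefined)"
    have "approx_rate m B N / 256 \<le> \<bar>Lf ?lin - Lf (gn N \<sigma> ?lin)\<bar>"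
      using approx_rate_le_lin_gain[OF B N lin] Lf_gn_lin_rate[OF N \<sigma> B, of undefined] by linarith
    then show ?thesis
      using lin_coord_in_Fclass[OF B] by blast
  next
    case cos
    let ?cos = "\<lambda>x::real^'d. cos_profile (B / (2 * pi * real N)) (2 * pi * real N) 0 (x $ undefined)"
    have "B \<le> real N"
      using cos N by (simp add: divide_le_eq)
    moreover have "approx_rate m B N / 256 = B / (256 * real N)"
      using cos by (simp add: approx_rate_def)
    ultimately have "approx_rate m B N / 256 \<le> \<bar>Lf ?cos - Lf (gn N \<sigma> ?cos)\<bar>"
      using Lf_gn_cos_rate[OF N \<sigma> B, of undefined] by linarith
    then show ?thesis
      using cos cos_coord_in_Fclass[OF B N] by blast
  next
    case quad
    let ?quad = "\<lambda>x::real^'d. quad_profile B 0 (x $ undefined)"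
    have "max B (B\<^sup>2) = B"
      using quad B by (simp add: power2_eq_square mult_left_le)
    then have "approx_rate m B N / 256 = B / (256 * (real N)\<^sup>2)"
      using quad by (simp add: approx_rate_def)
    then have "approx_rate m B N / 256 \<le> \<bar>Lf ?quad - Lf (gn N \<sigma> ?quad)\<bar>"
      using Lf_gn_quad_rate[OF N \<sigma> B quad(3), of undefined] by linarith
    then show ?thesis
      using quad_coord_in_Fclass[OF B] by blast
  qed
qed

lemma Lf_gn_SUP_ge_approx_rate:
  fixes \<sigma> :: "real^'d::finite \<Rightarrow> ('d \<Rightarrow> nat)"
  assumes "1 \<le> m" "0 \<le> B" "1 \<le> N" "valid_assign N \<sigma>"
  shows "approx_rate m B N / 256 \<le> (SUP f\<in>(Fclass m B :: (real^'d \<Rightarrow> real) set). \<bar>Lf f - Lf (gn N \<sigma> f)\<bar>)"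
proof -
  obtain f where f: "f \<in> Fclass m B" "approx_rate m B N / 256 \<le> \<bar>Lf f - Lf (gn N \<sigma> f)\<bar>"
    using exists_Fclass_Lf_gn_ge[OF assms] by blast
  have "bdd_above ((\<lambda>f. \<bar>Lf f - Lf (gn N \<sigma> f)\<bar>) ` (Fclass m B :: (real^'d \<Rightarrow> real) set))"
    using Lf_gn_le_approx_rate[OF _ assms(1,3,4)] by (intro bdd_aboveI2)
  then show ?thesis
    using f by (intro cSUP_upper2)
qed

lemma D_suplog_gn_SUP_ge:
  fixes \<sigma> :: "real^'d::finite \<Rightarrow> ('d \<Rightarrow> nat)"
  assumes B: "0 \<le> B" and N: "1 \<le> N" and \<sigma>: "valid_assign N \<sigma>"
  shows "ereal (B / (256 * real N))
    \<le> (SUP f\<in>(Fclass m B :: (real^'d \<Rightarrow> real) set). D_suplog (Pf f) (Pf (gn N \<sigma> f)))"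
proof (rule SUP_upper2[OF lin_coord_in_Fclass[OF B, of undefined]])
  have "B / (256 * real N) \<le> B / (4 * real N)"
    using B N by (intro divide_left_mono) auto
  then have "ereal (B / (256 * real N)) \<le> ereal (B / (4 * real N))"
    by simp
  also have "\<dots> \<le> D_suplog (Pf (\<lambda>x. lin_profile B 0 (x $ undefined)))
      (Pf (gn N \<sigma> (\<lambda>x. lin_profile B 0 (x $ undefined))))"
    by (rule D_suplog_gn_lin_lower[OF N \<sigma> B])
  finally show "ereal (B / (256 * real N)) \<le> D_suplog (Pf (\<lambda>x. lin_profile B 0 (x $ undefined)))
      (Pf (gn N \<sigma> (\<lambda>x. lin_profile B 0 (x $ undefined))))" .
qed

lemma Let_powr_approx_rate:
  fixes N :: nat
  assumes "1 \<le> N"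
  shows "(let n = N ^ CARD('d::finite); d = real CARD('d);
         r1 = B * real n powr (-1 / d);
         r = (if m = 1 \<or> r1 > 1 then r1 else max B (B^2) * real n powr (-2 / d))
     in P r1 r) = P (B / real N) (approx_rate m B N)"
proof -
  have "real (N ^ CARD('d)) powr (- k / real CARD('d)) = 1 / real N powr k" for k
    using assms by (simp add: powr_realpow[symmetric] powr_powr powr_minus_divide)
  then show ?thesis
    using assms by (simp add: Let_def approx_rate_def powr_numeral)
qed

lemma gn_approximation_bounds:
  fixes \<sigma> :: "real^'d::finite \<Rightarrow> ('d \<Rightarrow> nat)"
  assumes "1 \<le> m" "0 < B" "1 \<le> N" "valid_assign N \<sigma>"
  shows "(\<forall>f\<in>(Fclass m B :: (real^'d \<Rightarrow> real) set).
        \<bar>Lf f - Lf (gn N \<sigma> f)\<bar> \<le> ((real CARD('d))\<^sup>2 * exp (real CARD('d)) + real CARD('d)) * approx_rate m B N)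
      \<and> approx_rate m B N / 256 \<le> (SUP f\<in>(Fclass m B :: (real^'d \<Rightarrow> real) set). \<bar>Lf f - Lf (gn N \<sigma> f)\<bar>)
      \<and> (\<forall>f\<in>(Fclass m B :: (real^'d \<Rightarrow> real) set). D_suplog (Pf f) (Pf (gn N \<sigma> f))
          \<le> ereal (((real CARD('d))\<^sup>2 * exp (real CARD('d)) + real CARD('d)) * (B / real N)))
      \<and> ereal (B / (256 * real N))
          \<le> (SUP f\<in>(Fclass m B :: (real^'d \<Rightarrow> real) set). D_suplog (Pf f) (Pf (gn N \<sigma> f)))"
  using Lf_gn_le_approx_rate[OF _ assms(1,3,4)] Lf_gn_SUP_ge_approx_rate[OF assms(1) _ assms(3,4)]
    D_suplog_gn_le[OF _ assms(1,3,4)] D_suplog_gn_SUP_ge[OF _ assms(3,4)] assms(2)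
  by auto

theorem theorem16:
  fixes m :: nat
  assumes "m \<ge> 1"
  shows "\<exists>c>0. \<exists>C>0. \<forall>B>0. \<forall>N::nat. \<forall>\<sigma>::real^'d::finite \<Rightarrow> ('d \<Rightarrow> nat).
    N \<ge> 1 \<longrightarrow> valid_assign N \<sigma> \<longrightarrow>
    (let n = N ^ CARD('d); d = real CARD('d);
         r1 = B * real n powr (-1 / d);
         r = (if m = 1 \<or> r1 > 1 then r1 else max B (B^2) * real n powr (-2 / d))
     in (\<forall>f\<in>(Fclass m B :: (real^'d \<Rightarrow> real) set). \<bar>Lf f - Lf (gn N \<sigma> f)\<bar> \<le> C * r)
      \<and> c * r \<le> (SUP f\<in>(Fclass m B :: (real^'d \<Rightarrow> real) set). \<bar>Lf f - Lf (gn N \<sigma> f)\<bar>)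
      \<and> (\<forall>f\<in>(Fclass m B :: (real^'d \<Rightarrow> real) set).
            D_suplog (Pf f) (Pf (gn N \<sigma> f)) \<le> ereal (C * r1))
      \<and> ereal (c * r1) \<le> (SUP f\<in>(Fclass m B :: (real^'d \<Rightarrow> real) set).
            D_suplog (Pf f) (Pf (gn N \<sigma> f))))"
  apply (rule exI[of _ "1/256"],
      intro conjI exI[of _ "(real CARD('d))\<^sup>2 * exp (real CARD('d)) + real CARD('d)"] allI impI)
  subgoal
    by simp
  subgoal
    by (simp add: add_nonneg_pos)
  subgoal for B N \<sigma>
    by (subst Let_powr_approx_rate) (use gn_approximation_bounds[OF assms, of B N \<sigma>] in auto)
  done

end
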